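(* Let $t,b,k$ be positive integers with $4 \le k \le t$ such that $\ell = bk/(t(t-1))$ is an integer. Under model $(\mathcal{M}2)$, a circular design neighbor-balanced at distances 1 and 2, $d^*\in\Omega_{(t,b,k)}$, is universally optimal for the vector of total effects $\psi=\tau+\lambda+\rho$ over the class of all designs $d\in\Omega_{(t,b,k)}$ in which no treatment is a neighbor of itself at distance 1 or 2, i.e. $d(i,j)\neq d(i,j-1)$ and $d(i,j-1)\ne d(i,j+1)$ for all $1\le i\le b$, $1\le j\le k$.
   Context: Designs: there are $t$ treatments labelled $1,\dots,t$ and $b$ linear blocks. Block $i$ has inner plots $j=1,\dots,k$ and two border plots $j=0$ and $j=k+1$. A design $d$ assigns a treatment $d(i,j)$ to each plot, and is circular if $d(i,0)=d(i,k)$ and $d(i,k+1)=d(i,1)$ for all $i$. $\Omega_{(t,b,k)}$ is the set of all circular designs with $t$ treatments and $b$ blocks of length $k$. Model $(\mathcal{M}2)$: responses $Y_{i,j}$ ($1\le i\le b$, $1\le j\le k$) are uncorrelated with common variance and $\mathbb{E}(Y_{i,j})=\beta_i+\tau_{d(i,j)}+\lambda_{d(i,j-1)}+\rho_{d(i,j+1)}$; in vector form $\mathbb{E}(Y)=B\beta+T_d\tau+L_d\lambda+R_d\rho$, where $B$ is the block incidence matrix and $T_d,L_d,R_d$ ($bk\times t$) have in row $(i,j)$ a single $1$ in column $d(i,j)$, $d(i,j-1)$, $d(i,j+1)$ respectively. The total effects are $\psi=K'\alpha$ with $\alpha=(\tau',\lambda',\rho')'$, $K=\mathbf{1}_3\otimes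 I_t$. Information matrices: $A^+$ is the Moore–Penrose inverse, $\mathrm{pr}_{(A)}=A(A'A)^+A'$, $\mathrm{pr}^\perp_{(A)}=I-\mathrm{pr}_{(A)}$. In a model $\mathbb{E}(Y)=A\alpha+B\beta$ with uncorrelated homoscedastic errors, $C[\alpha]=A'\mathrm{pr}^\perp_{(B)}A$ and $C[K'\alpha]=X_1'\mathrm{pr}^\perp_{(X_2)}X_1$ with $X_1=AK(K'K)^+$, $X_2=(AM\mid B)$, $M=I-K(K'K)^+K'$. $C_d[\psi]$ is this matrix with $A=(T_d\mid L_d\mid R_d)$. A circular neighbor-balanced design (CNBD) is a design in $\Omega_{(t,b,k)}$ which is binary (each treatment at most once among the inner plots of each block), is a balanced block design (equal replication of treatments on inner plots and each unordered pair of distinct treatments occurring together in the same number of blocks), and such that for each ordered pair $(a,c)$ of distinct treatments exactly $\ell$ inner plots $(i,j)$ have $d(i,j)=a$, $d(i,j+1)=c$. A circular design neighbor-balanced at distances 1 and 2 (CNBD2) is a CNBD such that in addition for each ordered pair $(a,c)$ of distinct treatments exactly $\ell$ inner plots $(i,j)$ have $d(i,j-1)=a$ and $d(i,j+1)=c$. Universal optimality (Kiefer): $d^*$ is universally optimal over $\mathcal{D}$ if $\Phi(C_{d^*})\le\Phi(C_d)$ for all $d\in\mathcal{D}$ and every $\Phi$ on nonnegative definite symmetric $t\times t$ matrices, with values in $(-\infty,\infty]$, that is convex, has $\Phi(aC)$ nonincreasing in $a\ge0$, and is invariant under simultaneous permutation of rows and columns. *)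

theory Defs
  imports "Jordan_Normal_Form.Matrix" "HOL-Library.Extended_Real"
begin

text \<open>A design is a function d with d i j the treatment (in 1..t) of plot j (0..k+1) of block i
 (1..b). Values outside this index range are irrelevant.\<close>

definition is_design :: "nat \<Rightarrow> nat \<Rightarrow> nat \<Rightarrow> (nat \<Rightarrow> nat \<Rightarrow> nat) \<Rightarrow> bool" where
  "is_design t b k d \<longleftrightarrow> (\<forall>i\<in>{1..b}. \<forall>j\<in>{0..k+1}. d i j \<in> {1..t})"

definition circular :: "nat \<Rightarrow> nat \<Rightarrow> (nat \<Rightarrow> nat \<Rightarrow> nat) \<Rightarrow> bool" where
  "circular b k d \<longleftrightarrow> (\<forall>i\<in>{1..b}. d i 0 = d i k \<and> d i (k+1) = d i 1)"

definition Omega :: "nat \<Rightarrow> nat \<Rightarrow> nat \<Rightarrow> (nat \<Rightarrow> nat \<Rightarrow> nat) set" where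
  "Omega t b k = {d. is_design t b k d \<and> circular b k d}"

definition inner_plots :: "nat \<Rightarrow> nat \<Rightarrow> (nat \<times> nat) set" where
  "inner_plots b k = {1..b} \<times> {1..k}"

definition binary_design :: "nat \<Rightarrow> nat \<Rightarrow> (nat \<Rightarrow> nat \<Rightarrow> nat) \<Rightarrow> bool" where
  "binary_design b k d \<longleftrightarrow> (\<forall>i\<in>{1..b}. inj_on (d i) {1..k})"

definition balanced_block_design :: "nat \<Rightarrow> nat \<Rightarrow> nat \<Rightarrow> (nat \<Rightarrow> nat \<Rightarrow> nat) \<Rightarrow> bool" where
  "balanced_block_design t b k d \<longleftrightarrow>
     (\<exists>r. \<forall>a\<in>{1..t}. card {(i,j) \<in> inner_plots b k. d i j = a} = r) \<and>
     (\<exists>lam. \<forall>a\<in>{1..t}. \<forall>c\<in>{1..t}. a \<noteq> c \<longrightarrow>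
        card {i\<in>{1..b}. a \<in> d i ` {1..k} \<and> c \<in> d i ` {1..k}} = lam)"

definition CNBD :: "nat \<Rightarrow> nat \<Rightarrow> nat \<Rightarrow> nat \<Rightarrow> (nat \<Rightarrow> nat \<Rightarrow> nat) \<Rightarrow> bool" where
  "CNBD t b k l d \<longleftrightarrow> d \<in> Omega t b k \<and> binary_design b k d \<and> balanced_block_design t b k d \<and>
     (\<forall>a\<in>{1..t}. \<forall>c\<in>{1..t}. a \<noteq> c \<longrightarrow>
        card {(i,j) \<in> inner_plots b k. d i j = a \<and> d i (j+1) = c} = l)"

definition CNBD2 :: "nat \<Rightarrow> nat \<Rightarrow> nat \<Rightarrow> nat \<Rightarrow> (nat \<Rightarrow> nat \<Rightarrow> nat) \<Rightarrow> bool" where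
  "CNBD2 t b k l d \<longleftrightarrow> CNBD t b k l d \<and>
     (\<forall>a\<in>{1..t}. \<forall>c\<in>{1..t}. a \<noteq> c \<longrightarrow>
        card {(i,j) \<in> inner_plots b k. d i (j-1) = a \<and> d i (j+1) = c} = l)"

definition no_self_neighbors :: "nat \<Rightarrow> nat \<Rightarrow> (nat \<Rightarrow> nat \<Rightarrow> nat) \<Rightarrow> bool" where
  "no_self_neighbors b k d \<longleftrightarrow>
     (\<forall>i\<in>{1..b}. \<forall>j\<in>{1..k}. d i j \<noteq> d i (j-1) \<and> d i (j-1) \<noteq> d i (j+1))"

definition mp_inverse :: "real mat \<Rightarrow> real mat" where
  "mp_inverse A = (THE X. X \<in> carrier_mat (dim_col A) (dim_row A) \<and>
      A * X * A = A \<and> X * A * X = X \<and>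
      transpose_mat (A * X) = A * X \<and> transpose_mat (X * A) = X * A)"

definition proj :: "real mat \<Rightarrow> real mat" where
  "proj A = A * mp_inverse (transpose_mat A * A) * transpose_mat A"

definition proj_perp :: "real mat \<Rightarrow> real mat" where
  "proj_perp A = 1\<^sub>m (dim_row A) - proj A"

definition hconcat :: "real mat \<Rightarrow> real mat \<Rightarrow> real mat" where
  "hconcat A B = mat (dim_row A) (dim_col A + dim_col B)
     (\<lambda>(i,j). if j < dim_col A then A $$ (i,j) else B $$ (i, j - dim_col A))"

text \<open>Rows indexed by plots (i,j), i in 1..b, j in 1..k, as row number (i-1)*k + (j-1);
 treatment a corresponds to column a-1.\<close>
definition block_matrix :: "nat \<Rightarrow> nat \<Rightarrow> real mat" where
  "block_matrix b k = mat (b*k) b (\<lambda>(r,c). if r div k = c then 1 else 0)"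

definition treat_matrix :: "nat \<Rightarrow> nat \<Rightarrow> nat \<Rightarrow> int \<Rightarrow> (nat \<Rightarrow> nat \<Rightarrow> nat) \<Rightarrow> real mat" where
  "treat_matrix t b k s d = mat (b*k) t
     (\<lambda>(r,c). if d (r div k + 1) (nat (int (r mod k + 1) + s)) = c + 1 then 1 else 0)"

definition T_mat where "T_mat t b k d = treat_matrix t b k 0 d"
definition L_mat where "L_mat t b k d = treat_matrix t b k (-1) d"
definition R_mat where "R_mat t b k d = treat_matrix t b k 1 d"

text \<open>K = 1_3 (Kronecker) I_t.\<close>
definition K_mat :: "nat \<Rightarrow> real mat" where
  "K_mat t = mat (3*t) t (\<lambda>(i,j). if i mod t = j then 1 else 0)"

definition info_subsystem :: "real mat \<Rightarrow> real mat \<Rightarrow> real mat \<Rightarrow> real mat" where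
  "info_subsystem A B K =
     (let KKp = mp_inverse (transpose_mat K * K);
          X1 = A * K * KKp;
          M = 1\<^sub>m (dim_row K) - K * KKp * transpose_mat K;
          X2 = hconcat (A * M) B
      in transpose_mat X1 * proj_perp X2 * X1)"

definition C_total :: "nat \<Rightarrow> nat \<Rightarrow> nat \<Rightarrow> (nat \<Rightarrow> nat \<Rightarrow> nat) \<Rightarrow> real mat" where
  "C_total t b k d = info_subsystem
     (hconcat (hconcat (T_mat t b k d) (L_mat t b k d)) (R_mat t b k d))
     (block_matrix b k) (K_mat t)"

definition nnd_sym :: "nat \<Rightarrow> real mat \<Rightarrow> bool" where
  "nnd_sym t C \<longleftrightarrow> C \<in> carrier_mat t t \<and> transpose_mat C = C \<and>
     (\<forall>v \<in> carrier_vec t. v \<bullet> (C *\<^sub>v v) \<ge> 0)"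

definition kiefer_criterion :: "nat \<Rightarrow> (real mat \<Rightarrow> ereal) \<Rightarrow> bool" where
  "kiefer_criterion t \<Phi> \<longleftrightarrow>
     (\<forall>C. nnd_sym t C \<longrightarrow> \<Phi> C \<noteq> -\<infinity>) \<and>
     (\<forall>A B u. nnd_sym t A \<longrightarrow> nnd_sym t B \<longrightarrow> 0 < u \<longrightarrow> u < 1 \<longrightarrow>
        \<Phi> (u \<cdot>\<^sub>m A + (1 - u) \<cdot>\<^sub>m B) \<le> ereal u * \<Phi> A + ereal (1 - u) * \<Phi> B) \<and>
     (\<forall>C a a'. nnd_sym t C \<longrightarrow> 0 \<le> a \<longrightarrow> a \<le> a' \<longrightarrow> \<Phi> (a' \<cdot>\<^sub>m C) \<le> \<Phi> (a \<cdot>\<^sub>m C)) \<and>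
     (\<forall>C p. nnd_sym t C \<longrightarrow> p permutes {..<t} \<longrightarrow>
        \<Phi> (mat t t (\<lambda>(i,j). C $$ (p i, p j))) = \<Phi> C)"

definition universally_optimal ::
  "nat \<Rightarrow> ((nat \<Rightarrow> nat \<Rightarrow> nat) \<Rightarrow> real mat) \<Rightarrow> (nat \<Rightarrow> nat \<Rightarrow> nat) \<Rightarrow> (nat \<Rightarrow> nat \<Rightarrow> nat) set \<Rightarrow> bool" where
  "universally_optimal t C dstar D \<longleftrightarrow>
     (\<forall>\<Phi>. kiefer_criterion t \<Phi> \<longrightarrow> (\<forall>d\<in>D. \<Phi> (C dstar) \<le> \<Phi> (C d)))"

end

(* Kiefer's method. Let X1 = (T + L + R)/3 be the plot-by-treatment matrix of the total effects
   (T, L, R: incidences of the treatments on the plots and on their left and right neighbours).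
   The information matrix C_d for psi is X1' (I - P) X1, where P projects onto the span of the
   nuisance columns, among them the block indicators. So C_d is nonnegative definite with zero
   row sums, and since the range of P contains that of the block-averaging projector Q, its
   trace is at most that of X1' (I - Q) X1. If no treatment is its own neighbour at distance 1
   or 2, this trace equals bk/3 - (sum of n_ia^2)/k, where n_ia counts treatment a in block i;
   as n_ia <= n_ia^2 it is at most b (k - 3)/3, with equality for binary designs.
   For a CNBD2, neighbour balance gives T, L and R the same inner products with the columns of
   (I - Q) X1, which makes C_dstar = X1' (I - Q) X1: it is completely symmetric and has the maximal
   trace. Averaging C_d over all simultaneous permutations of the treatments yields r C_dstar with
   r <= 1, and convexity, permutation invariance and monotonicity of Phi give
   Phi(C_dstar) <= Phi(r C_dstar) <= Phi(C_d). *)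

theory Submission
  imports Defs "Jordan_Normal_Form.Gauss_Jordan_Elimination"
begin

section \<open>Moore-Penrose inverses and orthogonal projections\<close>

lemma assoc_mult_mat_dim:
  assumes "dim_col A = dim_row B" "dim_col B = dim_row C"
  shows "A * B * C = A * (B * (C :: 'a :: semiring_0 mat))"
proof -
  have "A \<in> carrier_mat (dim_row A) (dim_row B)" "B \<in> carrier_mat (dim_row B) (dim_row C)"
    "C \<in> carrier_mat (dim_row C) (dim_col C)"
    using assms unfolding carrier_mat_def by auto
  thus ?thesis by (rule assoc_mult_mat)
qed

lemma transpose_mult_dim:
  assumes "dim_col A = dim_row B"
  shows "transpose_mat (A * B) = transpose_mat B * transpose_mat (A :: 'a :: comm_semiring_0 mat)"
proof -
  have "A \<in> carrier_mat (dim_row A) (dim_row B)" "B \<in> carrier_mat (dim_row B) (dim_col B)"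
    using assms unfolding carrier_mat_def by auto
  thus ?thesis by (rule transpose_mult)
qed

lemma mult_minus_distrib_dim:
  assumes "dim_col A = dim_row B" "dim_row C = dim_row B" "dim_col C = dim_col B"
  shows "A * (B - C) = A * B - A * (C :: 'a :: ring mat)"
proof -
  have "A \<in> carrier_mat (dim_row A) (dim_row B)" "B \<in> carrier_mat (dim_row B) (dim_col B)"
    "C \<in> carrier_mat (dim_row B) (dim_col B)"
    using assms unfolding carrier_mat_def by auto
  thus ?thesis by (rule mult_minus_distrib_mat)
qed

lemma minus_mult_distrib_dim:
  assumes "dim_col A = dim_row C" "dim_row B = dim_row A" "dim_col B = dim_col A"
  shows "(A - B) * C = A * C - B * (C :: 'a :: ring mat)"
proof -
  have "A \<in> carrier_mat (dim_row A) (dim_col A)" "B \<in> carrier_mat (dim_row A) (dim_col A)"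
    "C \<in> carrier_mat (dim_col A) (dim_col C)"
    using assms unfolding carrier_mat_def by auto
  thus ?thesis by (rule minus_mult_distrib_mat)
qed

lemma index_transpose_mult:
  "X \<in> carrier_mat n t \<Longrightarrow> W \<in> carrier_mat n t' \<Longrightarrow> a < t \<Longrightarrow> c < t' \<Longrightarrow>
    (transpose_mat X * W) $$ (a, c) = (\<Sum>r<n. X $$ (r, a) * W $$ (r, c))"
  by (simp add: scalar_prod_def lessThan_atLeast0)

lemma gram_eq_0_imp_eq_0:
  fixes X :: "real mat"
  assumes X: "X \<in> carrier_mat n m" and G: "transpose_mat X * X = 0\<^sub>m m m"
  shows "X = 0\<^sub>m n m"
proof (rule eq_matI)
  fix i j assume "i < dim_row (0\<^sub>m n m :: real mat)" "j < dim_col (0\<^sub>m n m :: real mat)"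
  hence i: "i < n" and j: "j < m" by auto
  have "(\<Sum>l<n. (X $$ (l,j))\<^sup>2) = (transpose_mat X * X) $$ (j,j)"
    using X j by (simp add: scalar_prod_def lessThan_atLeast0 power2_eq_square)
  also have "\<dots> = 0" using G j by simp
  finally have "\<forall>l\<in>{..<n}. (X $$ (l,j))\<^sup>2 = 0"
    by (subst (asm) sum_nonneg_eq_0_iff) auto
  thus "X $$ (i,j) = 0\<^sub>m n m $$ (i,j)" using i j by simp
qed (use X in auto)

text \<open>H picks out the pivot columns of the row echelon form C, so C H is the identity on the
  pivot rows and vanishes on the zero rows.\<close>

lemma row_echelon_generalized_inverse:
  fixes C :: "real mat"
  assumes C: "C \<in> carrier_mat n m" and f: "pivot_fun C f m"
  defines "H \<equiv> mat m n (\<lambda>(j, i). if f i < m \<and> j = f i then 1 else 0)"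
  shows "C * H * C = C"
proof -
  have H: "H \<in> carrier_mat m n" unfolding H_def by simp
  note pv = pivot_funD[OF carrier_matD(1)[OF C] f]
  have CH: "(C * H) $$ (a, i) = (if f i < m \<and> a = i then 1 else 0)" if a: "a < n" and i: "i < n" for a i
  proof -
    have "(C * H) $$ (a, i) = (\<Sum>j\<in>{0..<m}. C $$ (a, j) * (if f i < m \<and> j = f i then 1 else 0))"
      using a i C H by (simp add: scalar_prod_def H_def)
    also have "\<dots> = (if f i < m then C $$ (a, f i) else 0)"
      by (auto simp: if_distrib cong: if_cong)
    also have "\<dots> = (if f i < m \<and> a = i then 1 else 0)"
      using pv(4)[OF i] pv(5)[OF i _ a] by auto
    finally show ?thesis .
  qed
  show ?thesis
  proof (rule eq_matI)
    fix a c assume "a < dim_row C" and "c < dim_col C"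
    hence a: "a < n" and c: "c < m" using C by auto
    have "(C * H * C) $$ (a, c) = (\<Sum>i\<in>{0..<n}. (C * H) $$ (a, i) * C $$ (i, c))"
      using a c C H by (simp add: scalar_prod_def del: assoc_mult_mat)
    also have "\<dots> = (\<Sum>i\<in>{0..<n}. if i = a then (if f a < m then C $$ (a, c) else 0) else 0)"
      using a by (intro sum.cong) (auto simp: CH)
    also have "\<dots> = C $$ (a, c)"
      using a c pv(1)[OF a] pv(2)[OF a, of c] by (cases "f a < m") auto
    finally show "(C * H * C) $$ (a, c) = C $$ (a, c)" .
  qed (use C H in auto)
qed

lemma generalized_inverse_exists:
  fixes A :: "real mat"
  assumes A: "A \<in> carrier_mat n m"
  shows "\<exists>H \<in> carrier_mat m n. A * H * A = A"
proof -
  define C where "C = gauss_jordan_single A"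
  note gj = gauss_jordan_single[OF A C_def[symmetric]]
  from gj(4) obtain P Q where CPA: "C = P * A" and P: "P \<in> carrier_mat n n" and Q: "Q \<in> carrier_mat n n"
    and PQ: "P * Q = 1\<^sub>m n" and QP: "Q * P = 1\<^sub>m n" by blast
  have C: "C \<in> carrier_mat n m" by (rule gj(2))
  from gj(3) obtain f where f: "pivot_fun C f m" unfolding row_echelon_form_def using C by auto
  define H where "H = mat m n (\<lambda>(j, i). if f i < m \<and> j = f i then 1 else (0 :: real))"
  have H: "H \<in> carrier_mat m n" unfolding H_def by simp
  have CHC: "C * H * C = C" unfolding H_def by (rule row_echelon_generalized_inverse[OF C f])
  have "Q * C = (Q * P) * A" using CPA P Q A by simp
  hence AQC: "A = Q * C" using QP A by simp
  have "A * (H * P) * A = Q * (C * H * (P * Q) * C)"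
    unfolding AQC using Q C H P by (simp add: assoc_mult_mat_dim del: assoc_mult_mat)
  also have "\<dots> = A" using CHC PQ C H AQC by simp
  finally show ?thesis using H P by (intro bexI[of _ "H * P"]) auto
qed

text \<open>With G = X' X, the matrix E = X H G - X satisfies X' E = 0 and hence E' E = 0.\<close>

lemma gram_generalized_inverse_cancel:
  fixes X H :: "real mat"
  assumes X: "X \<in> carrier_mat n m" and H: "H \<in> carrier_mat m m"
    and g: "transpose_mat X * X * H * (transpose_mat X * X) = transpose_mat X * X"
  shows "X * H * (transpose_mat X * X) = X"
proof -
  define G where "G = transpose_mat X * X"
  have Gc: "G \<in> carrier_mat m m" unfolding G_def using X by simp
  define E where "E = X * H * G - X"
  have Ec: "E \<in> carrier_mat n m" unfolding E_def using X H Gc by (simp add: minus_carrier_mat)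
  have "transpose_mat X * E = transpose_mat X * (X * H * G) - G"
    unfolding E_def G_def using X H Gc by (subst mult_minus_distrib_dim) auto
  also have "transpose_mat X * (X * H * G) = G * H * G"
    unfolding G_def using X H by (simp add: assoc_mult_mat_dim del: assoc_mult_mat)
  finally have XE: "transpose_mat X * E = 0\<^sub>m m m" using g Gc unfolding G_def by simp
  have EX: "transpose_mat E * X = 0\<^sub>m m m"
    using arg_cong[OF XE, of transpose_mat] X Ec by (simp add: transpose_mult_dim)
  have "transpose_mat E * E = transpose_mat E * (X * H * G) - transpose_mat E * X"
    unfolding E_def using X H Gc Ec by (subst mult_minus_distrib_dim) (auto simp: E_def)
  also have "transpose_mat E * (X * H * G) = transpose_mat E * X * H * G"
    using X H Gc Ec by (simp add: assoc_mult_mat_dim del: assoc_mult_mat)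
  finally have "E = 0\<^sub>m n m"
    using EX H Gc gram_eq_0_imp_eq_0[OF Ec] by simp
  have "X * H * G = X * H * G - X + X" using X H Gc by (intro eq_matI) auto
  also have "\<dots> = X" using \<open>E = 0\<^sub>m n m\<close> X unfolding E_def by simp
  finally show ?thesis unfolding G_def .
qed

definition penrose_inverse :: "real mat \<Rightarrow> real mat \<Rightarrow> bool" where
  "penrose_inverse A X \<longleftrightarrow> X \<in> carrier_mat (dim_col A) (dim_row A) \<and>
      A * X * A = A \<and> X * A * X = X \<and>
      transpose_mat (A * X) = A * X \<and> transpose_mat (X * A) = X * A"

text \<open>Both X and Y equal X A Y.\<close>

lemma penrose_inverse_unique:
  assumes X: "penrose_inverse A X" and Y: "penrose_inverse A Y"
  shows "X = Y"
proof -
  note px = X[unfolded penrose_inverse_def] and py = Y[unfolded penrose_inverse_def]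
  have dX: "dim_row X = dim_col A" "dim_col X = dim_row A"
   and dY: "dim_row Y = dim_col A" "dim_col Y = dim_row A" using px py by auto
  note dims = dX dY assoc_mult_mat_dim transpose_mult_dim
  let ?At = "transpose_mat A"
  have AX: "A * X = transpose_mat X * ?At" and XA: "X * A = ?At * transpose_mat X"
    using px dX by (metis transpose_mult_dim)+
  have AY: "A * Y = transpose_mat Y * ?At" and YA: "Y * A = ?At * transpose_mat Y"
    using py dY by (metis transpose_mult_dim)+
  have AtX: "?At = ?At * (transpose_mat X * ?At)"
    using arg_cong[OF px[THEN conjunct2, THEN conjunct1, symmetric], of transpose_mat] dX
    by (simp add: dims del: assoc_mult_mat)
  have AtY: "?At = ?At * (transpose_mat Y * ?At)"
    using arg_cong[OF py[THEN conjunct2, THEN conjunct1, symmetric], of transpose_mat] dY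
    by (simp add: dims del: assoc_mult_mat)
  have "X = X * (A * X)" using px by (simp add: dims del: assoc_mult_mat)
  also have "\<dots> = X * ((transpose_mat X * ?At) * (transpose_mat Y * ?At))"
    unfolding AX by (subst AtY) (simp add: dims del: assoc_mult_mat)
  also have "\<dots> = (X * A * X) * (A * Y)" unfolding AX[symmetric] AY[symmetric]
    by (simp add: dims del: assoc_mult_mat)
  finally have X_eq: "X = X * (A * Y)" using px by simp
  have "Y = (Y * A) * Y" using py by simp
  also have "\<dots> = ((?At * transpose_mat X) * (?At * transpose_mat Y)) * Y"
    unfolding YA by (subst AtX) (simp add: dims del: assoc_mult_mat)
  also have "\<dots> = X * (A * (Y * A * Y))" unfolding XA[symmetric] YA[symmetric]
    by (simp add: dims del: assoc_mult_mat)
  finally have "Y = X * (A * Y)" using py by simp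
  with X_eq show ?thesis by simp
qed

lemma sym_generalized_inverse_square:
  fixes G H :: "real mat"
  assumes G: "G \<in> carrier_mat n n" and S: "transpose_mat G = G" and H: "H \<in> carrier_mat n n"
    and gH: "G * G * H * (G * G) = G * G"
  shows "G * H * (G * G) = G" and "G * G * H * G = G" and "transpose_mat (G * H * G) = G * H * G"
proof -
  have GG: "transpose_mat G * G = G * G" using S by simp
  note dims = carrier_matD[OF G] carrier_matD[OF H] assoc_mult_mat_dim transpose_mult_dim
  show e1: "G * H * (G * G) = G" using gram_generalized_inverse_cancel[OF G H] gH GG by simp
  have "G * G * transpose_mat H * (G * G) = transpose_mat (G * G * H * (G * G))"
    using S by (simp add: dims del: assoc_mult_mat)
  also have "\<dots> = G * G" unfolding gH using S by (simp add: dims del: assoc_mult_mat)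
  finally have "G * G * transpose_mat H * (G * G) = G * G" .
  hence e2: "G * transpose_mat H * (G * G) = G"
    using gram_generalized_inverse_cancel[OF G, of "transpose_mat H"] GG H by simp
  show e3: "G * G * H * G = G"
    using arg_cong[OF e2, of transpose_mat] S by (simp add: dims del: assoc_mult_mat)
  have "transpose_mat (G * H * G) = G * transpose_mat H * (G * G * H * G)"
    using S e3 by (simp add: dims del: assoc_mult_mat)
  also have "\<dots> = (G * transpose_mat H * (G * G)) * H * G" by (simp add: dims del: assoc_mult_mat)
  finally show "transpose_mat (G * H * G) = G * H * G" using e2 by simp
qed

text \<open>With H a generalized inverse of G G, the matrix G H G H G satisfies the Penrose equations.\<close>

lemma penrose_inverse_exists_sym:
  fixes G :: "real mat"
  assumes G: "G \<in> carrier_mat n n" and S: "transpose_mat G = G"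
  shows "\<exists>Y. penrose_inverse G Y"
proof -
  obtain H where H: "H \<in> carrier_mat n n" and gH: "G * G * H * (G * G) = G * G"
    using generalized_inverse_exists[of "G * G" n n] G by auto
  note e = sym_generalized_inverse_square[OF G S H gH]
  note dims = carrier_matD[OF G] carrier_matD[OF H] assoc_mult_mat_dim
  define Y where "Y = G * H * G * H * G"
  have "G * Y = (G * G * H * G) * H * G" unfolding Y_def by (simp add: dims del: assoc_mult_mat)
  hence GY: "G * Y = G * H * G" using e(2) by simp
  have "Y * G = G * H * (G * H * (G * G))" unfolding Y_def by (simp add: dims del: assoc_mult_mat)
  hence YG: "Y * G = G * H * G" using e(1) by simp
  have "penrose_inverse G Y"
    unfolding penrose_inverse_def
  proof (intro conjI)
    show "Y \<in> carrier_mat (dim_col G) (dim_row G)" unfolding Y_def using G H by auto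
    have "G * Y * G = G * H * (G * G)" using GY by (simp add: dims del: assoc_mult_mat)
    thus "G * Y * G = G" using e(1) by simp
    have "Y * G * Y = G * H * (G * G * H * G) * H * G"
      unfolding YG unfolding Y_def by (simp add: dims del: assoc_mult_mat)
    thus "Y * G * Y = Y" using e(2) unfolding Y_def by simp
    show "transpose_mat (G * Y) = G * Y" "transpose_mat (Y * G) = Y * G"
      using GY YG e(3) by simp_all
  qed
  thus ?thesis by blast
qed

lemma mp_inverse_eqI: "penrose_inverse A X \<Longrightarrow> mp_inverse A = X"
  unfolding mp_inverse_def penrose_inverse_def[symmetric] using penrose_inverse_unique by blast

lemma penrose_inverse_mp_inverse_sym:
  assumes "G \<in> carrier_mat n n" "transpose_mat G = G"
  shows "penrose_inverse G (mp_inverse G)"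
  using penrose_inverse_exists_sym[OF assms] mp_inverse_eqI by blast

lemma mp_inverse_transpose_sym:
  assumes G: "G \<in> carrier_mat n n" and S: "transpose_mat G = G"
  shows "transpose_mat (mp_inverse G) = mp_inverse G"
proof -
  define Y where "Y = mp_inverse G"
  have p: "penrose_inverse G Y" unfolding Y_def by (rule penrose_inverse_mp_inverse_sym[OF G S])
  note pp = p[unfolded penrose_inverse_def]
  have Yc: "Y \<in> carrier_mat n n" using pp G by simp
  note dims = carrier_matD[OF G] carrier_matD[OF Yc] assoc_mult_mat_dim transpose_mult_dim
  have GYt: "G * transpose_mat Y = Y * G" using transpose_mult_dim[of Y G] pp S Yc G by simp
  have YtG: "transpose_mat Y * G = G * Y" using transpose_mult_dim[of G Y] pp S Yc G by simp
  have "penrose_inverse G (transpose_mat Y)"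
    unfolding penrose_inverse_def
  proof (intro conjI)
    show "transpose_mat Y \<in> carrier_mat (dim_col G) (dim_row G)" using Yc G by simp
    show "G * transpose_mat Y * G = G"
      using arg_cong[OF pp[THEN conjunct2, THEN conjunct1], of transpose_mat] S
      by (simp add: dims del: assoc_mult_mat)
    show "transpose_mat Y * G * transpose_mat Y = transpose_mat Y"
      using arg_cong[OF pp[THEN conjunct2, THEN conjunct2, THEN conjunct1], of transpose_mat] S
      by (simp add: dims del: assoc_mult_mat)
    show "transpose_mat (G * transpose_mat Y) = G * transpose_mat Y"
      "transpose_mat (transpose_mat Y * G) = transpose_mat Y * G"
      unfolding GYt YtG using pp by simp_all
  qed
  thus ?thesis using p penrose_inverse_unique unfolding Y_def by blast
qed

definition orth_projector :: "nat \<Rightarrow> real mat \<Rightarrow> bool" where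
  "orth_projector n P \<longleftrightarrow> P \<in> carrier_mat n n \<and> transpose_mat P = P \<and> P * P = P"

lemma orth_projector_proj:
  assumes X: "X \<in> carrier_mat n m"
  shows "orth_projector n (proj X)" and "proj X * X = X"
proof -
  define G where "G = transpose_mat X * X"
  have G: "G \<in> carrier_mat m m" unfolding G_def using X by simp
  have GS: "transpose_mat G = G" unfolding G_def using X by (simp add: transpose_mult_dim)
  define Y where "Y = mp_inverse G"
  note pp = penrose_inverse_mp_inverse_sym[OF G GS, folded Y_def, unfolded penrose_inverse_def]
  have Y: "Y \<in> carrier_mat m m" using pp G by simp
  have YS: "transpose_mat Y = Y" unfolding Y_def by (rule mp_inverse_transpose_sym[OF G GS])
  note dims = carrier_matD[OF X] carrier_matD[OF Y] assoc_mult_mat_dim transpose_mult_dim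
  have P: "proj X = X * Y * transpose_mat X" unfolding proj_def Y_def G_def ..
  have "X * Y * G = X" using gram_generalized_inverse_cancel[OF X Y] pp unfolding G_def by simp
  thus "proj X * X = X" unfolding P G_def by (simp add: dims del: assoc_mult_mat)
  have "proj X * proj X = X * (Y * G * Y) * transpose_mat X"
    unfolding P G_def by (simp add: dims del: assoc_mult_mat)
  thus "orth_projector n (proj X)"
    unfolding orth_projector_def using pp YS by (auto simp: P dims simp del: assoc_mult_mat)
qed

lemma orth_projector_complement:
  assumes "orth_projector n P"
  shows "orth_projector n (1\<^sub>m n - P)"
proof -
  have P: "P \<in> carrier_mat n n" "transpose_mat P = P" "P * P = P"
    using assms unfolding orth_projector_def by auto
  have "(1\<^sub>m n - P) * (1\<^sub>m n - P) = (1\<^sub>m n - P) - (P - P * P)"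
    using P by (simp add: minus_mult_distrib_dim mult_minus_distrib_dim)
  also have "\<dots> = 1\<^sub>m n - P" using P by (intro eq_matI) auto
  moreover have "transpose_mat (1\<^sub>m n - P) = 1\<^sub>m n - P"
    using P by (subst transpose_minus[of _ n n]) auto
  ultimately show ?thesis unfolding orth_projector_def using P by auto
qed

lemma orth_projector_diff:
  assumes P: "orth_projector n P" and Q: "orth_projector n Q" and PQ: "P * Q = Q"
  shows "orth_projector n (P - Q)"
proof -
  have Pc: "P \<in> carrier_mat n n" and Qc: "Q \<in> carrier_mat n n"
    using P Q unfolding orth_projector_def by auto
  have "transpose_mat (P * Q) = transpose_mat Q * transpose_mat P" using Pc Qc by (rule transpose_mult)
  hence QP: "Q * P = Q" using PQ P Q unfolding orth_projector_def by simp
  have "(P - Q) * (P - Q) = (P * P - Q * P) - (P * Q - Q * Q)"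
    using Pc Qc by (simp add: minus_mult_distrib_dim mult_minus_distrib_dim)
  also have "\<dots> = P - Q"
    using P Q QP PQ Pc Qc unfolding orth_projector_def by (intro eq_matI) auto
  moreover have "transpose_mat (P - Q) = P - Q"
    using P Q Pc Qc unfolding orth_projector_def by (subst transpose_minus[of _ n n]) auto
  ultimately show ?thesis using Pc Qc unfolding orth_projector_def by auto
qed

lemma orth_projector_sandwich:
  assumes R: "orth_projector n R" and Z: "Z \<in> carrier_mat n t"
  shows "transpose_mat Z * R * Z = transpose_mat (R * Z) * (R * Z)"
proof -
  have "R \<in> carrier_mat n n" using R unfolding orth_projector_def by simp
  hence "transpose_mat (R * Z) * (R * Z) = transpose_mat Z * (transpose_mat R * R) * Z"
    using Z by (simp add: transpose_mult_dim assoc_mult_mat_dim del: assoc_mult_mat)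
  thus ?thesis using R unfolding orth_projector_def by metis
qed

lemma quadratic_form_sum:
  assumes "M \<in> carrier_mat t t" and "v \<in> carrier_vec t"
  shows "v \<bullet> (M *\<^sub>v v) = (\<Sum>i<t. \<Sum>j<t. v $ i * M $$ (i,j) * v $ j)"
  using assms by (simp add: scalar_prod_def sum_distrib_left lessThan_atLeast0 mult.assoc)

lemma nnd_sym_gram:
  fixes Z :: "real mat"
  assumes Z: "Z \<in> carrier_mat n t"
  shows "nnd_sym t (transpose_mat Z * Z)"
  unfolding nnd_sym_def
proof (intro conjI ballI)
  show "transpose_mat Z * Z \<in> carrier_mat t t" using Z by simp
  show "transpose_mat (transpose_mat Z * Z) = transpose_mat Z * Z"
    using Z by (simp add: transpose_mult_dim)
  fix v :: "real vec" assume v: "v \<in> carrier_vec t"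
  have "v \<bullet> ((transpose_mat Z * Z) *\<^sub>v v) = (transpose_mat Z *\<^sub>v (Z *\<^sub>v v)) \<bullet> v"
    using Z v by (simp add: comm_scalar_prod[of _ t])
  also have "\<dots> = (Z *\<^sub>v v) \<bullet> (Z *\<^sub>v v)"
    using Z v by (intro transpose_vec_mult_scalar[of _ n t]) auto
  finally show "v \<bullet> ((transpose_mat Z * Z) *\<^sub>v v) \<ge> 0"
    by (simp add: scalar_prod_def sum_nonneg)
qed

definition mat_trace :: "real mat \<Rightarrow> real" where
  "mat_trace A = (\<Sum>i<dim_row A. A $$ (i,i))"

lemma mat_trace_gram_nonneg: "mat_trace (transpose_mat Z * Z) \<ge> 0"
  unfolding mat_trace_def by (intro sum_nonneg) (simp add: scalar_prod_def sum_nonneg)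

lemma mat_trace_add:
  "A \<in> carrier_mat n n \<Longrightarrow> B \<in> carrier_mat n n \<Longrightarrow> mat_trace (A + B) = mat_trace A + mat_trace B"
  unfolding mat_trace_def by (simp add: sum.distrib)

lemma mat_trace_smult: "A \<in> carrier_mat n n \<Longrightarrow> mat_trace (r \<cdot>\<^sub>m A) = r * mat_trace A"
  unfolding mat_trace_def by (simp add: sum_distrib_left)

lemma nnd_sym_mat_trace_nonneg:
  assumes C: "nnd_sym t C"
  shows "mat_trace C \<ge> 0"
proof -
  have Cc: "C \<in> carrier_mat t t" using C unfolding nnd_sym_def by simp
  have "C $$ (i, i) \<ge> 0" if i: "i < t" for i
  proof -
    have "unit_vec t i \<bullet> (C *\<^sub>v unit_vec t i)
        = (\<Sum>a<t. \<Sum>c<t. unit_vec t i $ a * C $$ (a, c) * unit_vec t i $ c)"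
      by (rule quadratic_form_sum[OF Cc]) simp
    also have "\<dots> = (\<Sum>a<t. if a = i then C $$ (i, i) else 0)"
      using i by (intro sum.cong refl) (auto simp: unit_vec_def if_distrib[of "\<lambda>x. _ * x"] cong: if_cong)
    finally have "unit_vec t i \<bullet> (C *\<^sub>v unit_vec t i) = C $$ (i, i)" using i by simp
    moreover have "unit_vec t i \<in> carrier_vec t" by simp
    ultimately show ?thesis using C unfolding nnd_sym_def by metis
  qed
  thus ?thesis using Cc unfolding mat_trace_def by (auto intro!: sum_nonneg)
qed

text \<open>If the range of Q lies in that of P, then P - Q is an orthogonal projector, so the trace of
  Z' (P - Q) Z is a sum of squares.\<close>

lemma mat_trace_sandwich_mono:
  assumes P: "orth_projector n P" and Q: "orth_projector n Q" and PQ: "P * Q = Q"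
    and Z: "Z \<in> carrier_mat n t"
  shows "mat_trace (transpose_mat Z * (1\<^sub>m n - P) * Z) \<le> mat_trace (transpose_mat Z * (1\<^sub>m n - Q) * Z)"
proof -
  have Pc: "P \<in> carrier_mat n n" and Qc: "Q \<in> carrier_mat n n"
    using P Q unfolding orth_projector_def by auto
  have "1\<^sub>m n - Q = (1\<^sub>m n - P) + (P - Q)" using Pc Qc by (intro eq_matI) auto
  moreover have "transpose_mat Z * ((1\<^sub>m n - P) + (P - Q)) * Z
      = transpose_mat Z * (1\<^sub>m n - P) * Z + transpose_mat Z * (P - Q) * Z"
  proof -
    have "transpose_mat Z * ((1\<^sub>m n - P) + (P - Q))
        = transpose_mat Z * (1\<^sub>m n - P) + transpose_mat Z * (P - Q)"
      by (rule mult_add_distrib_mat) (use Z Pc Qc in auto)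
    moreover have "(transpose_mat Z * (1\<^sub>m n - P) + transpose_mat Z * (P - Q)) * Z
        = transpose_mat Z * (1\<^sub>m n - P) * Z + transpose_mat Z * (P - Q) * Z"
      by (rule add_mult_distrib_mat) (use Z Pc Qc in auto)
    ultimately show ?thesis by simp
  qed
  ultimately have "transpose_mat Z * (1\<^sub>m n - Q) * Z
      = transpose_mat Z * (1\<^sub>m n - P) * Z + transpose_mat Z * (P - Q) * Z" by simp
  hence "mat_trace (transpose_mat Z * (1\<^sub>m n - Q) * Z)
      = mat_trace (transpose_mat Z * (1\<^sub>m n - P) * Z) + mat_trace (transpose_mat Z * (P - Q) * Z)"
    using Z Pc Qc by (simp only:) (rule mat_trace_add[of _ t]; auto)
  moreover have "mat_trace (transpose_mat Z * (P - Q) * Z) \<ge> 0"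
    using orth_projector_sandwich[OF orth_projector_diff[OF P Q PQ] Z] mat_trace_gram_nonneg by simp
  ultimately show ?thesis by simp
qed

section \<open>Information matrices of a subsystem\<close>

lemma hconcat_carrier:
  "U \<in> carrier_mat n q \<Longrightarrow> B \<in> carrier_mat n p \<Longrightarrow> hconcat U B \<in> carrier_mat n (q + p)"
  unfolding hconcat_def by simp

lemma index_hconcat:
  "U \<in> carrier_mat n q \<Longrightarrow> B \<in> carrier_mat n p \<Longrightarrow> i < n \<Longrightarrow> c < q + p \<Longrightarrow>
    hconcat U B $$ (i, c) = (if c < q then U $$ (i, c) else B $$ (i, c - q))"
  unfolding hconcat_def by simp

lemma col_hconcat_left: "U \<in> carrier_mat n q \<Longrightarrow> j < q \<Longrightarrow> col (hconcat U B) j = col U j"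
  by (intro eq_vecI) (auto simp: hconcat_def)

lemma col_hconcat_right:
  "U \<in> carrier_mat n q \<Longrightarrow> B \<in> carrier_mat n p \<Longrightarrow> j < p \<Longrightarrow> col (hconcat U B) (q + j) = col B j"
  by (intro eq_vecI) (auto simp: hconcat_def)

lemma proj_hconcat_mult_right:
  assumes U: "U \<in> carrier_mat n q" and B: "B \<in> carrier_mat n p"
  shows "proj (hconcat U B) * B = B"
proof -
  define X where "X = hconcat U B"
  have X: "X \<in> carrier_mat n (q + p)" unfolding X_def by (rule hconcat_carrier[OF U B])
  have P: "proj X \<in> carrier_mat n n" and PX: "proj X * X = X"
    using orth_projector_proj[OF X] unfolding orth_projector_def by auto
  show ?thesis unfolding X_def[symmetric]
  proof (rule eq_matI)
    fix i j assume "i < dim_row B" "j < dim_col B"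
    hence i: "i < n" and j: "j < p" using B by auto
    have "(proj X * B) $$ (i, j) = (proj X * X) $$ (i, q + j)"
      using P X B i j col_hconcat_right[OF U B j] unfolding X_def by simp
    also have "\<dots> = X $$ (i, q + j)" using PX by simp
    also have "\<dots> = B $$ (i, j)" using U B i j unfolding X_def by (simp add: hconcat_def)
    finally show "(proj X * B) $$ (i, j) = B $$ (i, j)" .
  qed (use P B in auto)
qed

lemma transpose_hconcat_mult_eq_0:
  fixes U B V :: "real mat"
  assumes U: "U \<in> carrier_mat n q" and B: "B \<in> carrier_mat n p" and V: "V \<in> carrier_mat n t"
    and UV: "transpose_mat U * V = 0\<^sub>m q t" and BV: "transpose_mat B * V = 0\<^sub>m p t"
  shows "transpose_mat (hconcat U B) * V = 0\<^sub>m (q + p) t"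
proof (rule eq_matI)
  fix c j assume "c < dim_row (0\<^sub>m (q + p) t :: real mat)" "j < dim_col (0\<^sub>m (q + p) t :: real mat)"
  hence c: "c < q + p" and j: "j < t" by auto
  have "(transpose_mat (hconcat U B) * V) $$ (c, j) = col (hconcat U B) c \<bullet> col V j"
    using hconcat_carrier[OF U B] V c j by simp
  also have "\<dots> = 0"
  proof (cases "c < q")
    case True
    thus ?thesis using col_hconcat_left[OF U True] arg_cong[OF UV, of "\<lambda>M. M $$ (c, j)"] U V j
      by simp
  next
    case False
    then obtain j' where c: "c = q + j'" and j': "j' < p" using c by (metis add_less_imp_less_left le_Suc_ex not_le)
    thus ?thesis using col_hconcat_right[OF U B j'] arg_cong[OF BV, of "\<lambda>M. M $$ (j', j)"] B V j
      by simp
  qed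
  finally show "(transpose_mat (hconcat U B) * V) $$ (c, j) = 0\<^sub>m (q + p) t $$ (c, j)"
    using c j by simp
qed (use U B V in \<open>auto simp: hconcat_def\<close>)

lemma proj_mult_eq_0:
  assumes X: "X \<in> carrier_mat n m" and V: "V \<in> carrier_mat n t"
    and XV: "transpose_mat X * V = 0\<^sub>m m t"
  shows "proj X * V = 0\<^sub>m n t"
proof -
  define Y where "Y = mp_inverse (transpose_mat X * X)"
  have G: "transpose_mat X * X \<in> carrier_mat m m" using X by simp
  have "transpose_mat (transpose_mat X * X) = transpose_mat X * X" using X by (simp add: transpose_mult_dim)
  hence Y: "Y \<in> carrier_mat m m"
    using penrose_inverse_mp_inverse_sym[OF G] G X unfolding Y_def penrose_inverse_def by simp
  have "proj X * V = X * Y * (transpose_mat X * V)"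
    unfolding proj_def Y_def[symmetric] using X Y V by (simp add: assoc_mult_mat_dim del: assoc_mult_mat)
  thus ?thesis using XV X Y by simp
qed

lemma info_matrix_gram:
  assumes X1: "X1 \<in> carrier_mat n t" and X2: "X2 \<in> carrier_mat n m"
  shows "transpose_mat X1 * proj_perp X2 * X1
    = transpose_mat ((1\<^sub>m n - proj X2) * X1) * ((1\<^sub>m n - proj X2) * X1)"
  using orth_projector_sandwich[OF orth_projector_complement[OF orth_projector_proj(1)[OF X2]] X1] X2
  unfolding proj_perp_def by simp

lemma nnd_sym_info_matrix:
  assumes X1: "X1 \<in> carrier_mat n t" and X2: "X2 \<in> carrier_mat n m"
  shows "nnd_sym t (transpose_mat X1 * proj_perp X2 * X1)"
proof -
  have P: "proj X2 \<in> carrier_mat n n"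
    using orth_projector_proj(1)[OF X2] unfolding orth_projector_def by simp
  show ?thesis unfolding info_matrix_gram[OF X1 X2]
    by (rule nnd_sym_gram, rule mult_carrier_mat[OF minus_carrier_mat[OF P] X1])
qed

lemma mat_trace_info_matrix_le:
  assumes X1: "X1 \<in> carrier_mat n t" and X2: "X2 \<in> carrier_mat n m"
    and Q: "orth_projector n Q" and PQ: "proj X2 * Q = Q"
  shows "mat_trace (transpose_mat X1 * proj_perp X2 * X1) \<le> mat_trace (transpose_mat X1 * (1\<^sub>m n - Q) * X1)"
  using mat_trace_sandwich_mono[OF orth_projector_proj(1)[OF X2] Q PQ X1] X2
  unfolding proj_perp_def by simp

lemma info_matrix_mult_vec_eq_0:
  assumes X1: "X1 \<in> carrier_mat n t" and X2: "X2 \<in> carrier_mat n m" and B: "B \<in> carrier_mat n p"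
    and PB: "proj X2 * B = B" and v: "v \<in> carrier_vec t" and w: "w \<in> carrier_vec p"
    and X1v: "X1 *\<^sub>v v = B *\<^sub>v w"
  shows "(transpose_mat X1 * proj_perp X2 * X1) *\<^sub>v v = 0\<^sub>v t"
proof -
  define Z where "Z = (1\<^sub>m n - proj X2) * X1"
  have P: "proj X2 \<in> carrier_mat n n" using orth_projector_proj(1)[OF X2] unfolding orth_projector_def by simp
  have Z: "Z \<in> carrier_mat n t" unfolding Z_def by (rule mult_carrier_mat[OF minus_carrier_mat[OF P] X1])
  have R: "1\<^sub>m n - proj X2 \<in> carrier_mat n n" by (rule minus_carrier_mat[OF P])
  have RB: "(1\<^sub>m n - proj X2) * B = 0\<^sub>m n p" using P B PB by (simp add: minus_mult_distrib_dim)
  have "Z *\<^sub>v v = (1\<^sub>m n - proj X2) *\<^sub>v (B *\<^sub>v w)" unfolding Z_def using R X1 v X1v by simp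
  also have "\<dots> = ((1\<^sub>m n - proj X2) * B) *\<^sub>v w" using R B w by simp
  also have "\<dots> = 0\<^sub>v n" unfolding RB using w by (intro eq_vecI) (auto simp: scalar_prod_def)
  finally have "Z *\<^sub>v v = 0\<^sub>v n" .
  hence "(transpose_mat Z * Z) *\<^sub>v v = transpose_mat Z *\<^sub>v 0\<^sub>v n" using Z v by simp
  thus ?thesis unfolding info_matrix_gram[OF X1 X2] Z_def[symmetric] using Z
    by (auto intro!: eq_vecI simp: scalar_prod_def)
qed

lemma info_matrix_eq:
  assumes X1: "X1 \<in> carrier_mat n t" and X2: "X2 \<in> carrier_mat n m"
    and Q: "orth_projector n Q" and PQ: "proj X2 * Q = Q"
    and X2Q: "transpose_mat X2 * ((1\<^sub>m n - Q) * X1) = 0\<^sub>m m t"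
  shows "transpose_mat X1 * proj_perp X2 * X1 = transpose_mat X1 * (1\<^sub>m n - Q) * X1"
proof -
  have P: "proj X2 \<in> carrier_mat n n" using orth_projector_proj(1)[OF X2] unfolding orth_projector_def by simp
  have Qc: "Q \<in> carrier_mat n n" using Q unfolding orth_projector_def by simp
  have "proj X2 * ((1\<^sub>m n - Q) * X1) = 0\<^sub>m n t"
    by (rule proj_mult_eq_0[OF X2 _ X2Q]) (use Qc X1 in auto)
  hence D: "proj X2 * X1 - Q * X1 = 0\<^sub>m n t"
    using P Qc X1 PQ by (simp add: mult_minus_distrib_dim minus_mult_distrib_dim flip: assoc_mult_mat)
  have "proj X2 * X1 = Q * X1"
  proof (rule eq_matI)
    fix i j assume "i < dim_row (Q * X1)" "j < dim_col (Q * X1)"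
    thus "(proj X2 * X1) $$ (i, j) = (Q * X1) $$ (i, j)"
      using arg_cong[OF D, of "\<lambda>M. M $$ (i, j)"] P Qc X1 by simp
  qed (use P Qc X1 in auto)
  hence "(1\<^sub>m n - proj X2) * X1 = (1\<^sub>m n - Q) * X1"
    using P Qc X1 by (simp add: minus_mult_distrib_dim)
  thus ?thesis using X1 X2 P Qc unfolding proj_perp_def
    by (simp add: assoc_mult_mat_dim del: assoc_mult_mat)
qed

section \<open>Kiefer's universal optimality criterion\<close>

definition completely_symmetric :: "nat \<Rightarrow> real mat \<Rightarrow> bool" where
  "completely_symmetric t C \<longleftrightarrow> C \<in> carrier_mat t t \<and>
     (\<forall>i<t. \<forall>j<t. C $$ (i,i) = C $$ (j,j)) \<and>
     (\<forall>i<t. \<forall>j<t. \<forall>i'<t. \<forall>j'<t. i \<noteq> j \<longrightarrow> i' \<noteq> j' \<longrightarrow> C $$ (i,j) = C $$ (i',j'))"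

definition zero_row_sums :: "nat \<Rightarrow> real mat \<Rightarrow> bool" where
  "zero_row_sums t C \<longleftrightarrow> (\<forall>i<t. (\<Sum>j<t. C $$ (i,j)) = 0)"

definition ones_vec :: "nat \<Rightarrow> real vec" where
  "ones_vec n = vec n (\<lambda>_. 1)"

lemma zero_row_sumsI:
  assumes C: "C \<in> carrier_mat t t" and z: "C *\<^sub>v ones_vec t = 0\<^sub>v t"
  shows "zero_row_sums t C"
  unfolding zero_row_sums_def
proof (intro allI impI)
  fix i assume i: "i < t"
  have "(\<Sum>j<t. C $$ (i, j)) = (C *\<^sub>v ones_vec t) $ i"
    using C i by (simp add: ones_vec_def scalar_prod_def lessThan_atLeast0)
  thus "(\<Sum>j<t. C $$ (i, j)) = 0" using z i by simp
qed

lemma completely_symmetric_entries: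
  assumes C: "completely_symmetric t C" and z: "zero_row_sums t C" and t: "2 \<le> t"
    and i: "i < t" and j: "j < t"
  shows "C $$ (i,j) = (if i = j then mat_trace C / t else - mat_trace C / (t * (t - 1)))"
proof -
  have Cc: "C \<in> carrier_mat t t" using C unfolding completely_symmetric_def by simp
  have t01: "0 < t" "1 < t" using t by auto
  define \<alpha> where "\<alpha> = C $$ (0,0)"
  define \<beta> where "\<beta> = C $$ (0,1)"
  have diag: "C $$ (a,a) = \<alpha>" if "a < t" for a
    using C that t01 unfolding completely_symmetric_def \<alpha>_def by blast
  have off: "C $$ (a,c) = \<beta>" if "a < t" "c < t" "a \<noteq> c" for a c
    using C that t01 unfolding completely_symmetric_def \<beta>_def by (meson zero_neq_one)
  have tr: "mat_trace C = t * \<alpha>" unfolding mat_trace_def using Cc diag by simp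
  obtain t' where t': "t = Suc t'" using t by (cases t) auto
  have "0 = (\<Sum>c<t. C $$ (0,c))" using z t01 unfolding zero_row_sums_def by simp
  also have "\<dots> = \<alpha> + t' * \<beta>" unfolding t' sum.lessThan_Suc_shift using off t' \<alpha>_def by simp
  finally have "\<beta> = - \<alpha> / t'" using t t' by (simp add: field_simps)
  moreover have "real t * real (t - 1) = t * t'" using t' by (simp add: algebra_simps)
  ultimately show ?thesis using diag[OF i] off[OF i j] tr t01 by auto
qed

lemma completely_symmetric_eqI:
  assumes "completely_symmetric t A" "zero_row_sums t A" "completely_symmetric t B" "zero_row_sums t B"
    and "mat_trace A = mat_trace B" and "2 \<le> t"
  shows "A = B"
proof (rule eq_matI)
  show "dim_row A = dim_row B" "dim_col A = dim_col B"
    using assms(1,3) unfolding completely_symmetric_def by auto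
  fix i j assume "i < dim_row B" "j < dim_col B"
  hence "i < t" "j < t" using assms(3) unfolding completely_symmetric_def by auto
  thus "A $$ (i,j) = B $$ (i,j)"
    using completely_symmetric_entries[OF assms(1,2,6)] completely_symmetric_entries[OF assms(3,4,6)] assms(5)
    by simp
qed

lemma completely_symmetric_smult:
  assumes C: "completely_symmetric t C"
  shows "completely_symmetric t (r \<cdot>\<^sub>m C)"
proof -
  have Cc: "C \<in> carrier_mat t t" using C unfolding completely_symmetric_def by simp
  have diag: "C $$ (i, i) = C $$ (j, j)" if "i < t" "j < t" for i j
    using C that unfolding completely_symmetric_def by blast
  have off: "C $$ (i, j) = C $$ (i', j')" if "i < t" "j < t" "i' < t" "j' < t" "i \<noteq> j" "i' \<noteq> j'"
    for i j i' j' using C that unfolding completely_symmetric_def by blast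
  show ?thesis unfolding completely_symmetric_def
  proof (intro conjI allI impI)
    show "r \<cdot>\<^sub>m C \<in> carrier_mat t t" using Cc by simp
    fix i j assume ij: "i < t" "j < t"
    show "(r \<cdot>\<^sub>m C) $$ (i, i) = (r \<cdot>\<^sub>m C) $$ (j, j)" using Cc ij diag[OF ij] by simp
    fix i' j' assume ij': "i' < t" "j' < t" "i \<noteq> j" "i' \<noteq> j'"
    show "(r \<cdot>\<^sub>m C) $$ (i, j) = (r \<cdot>\<^sub>m C) $$ (i', j')" using Cc ij ij' off[OF ij ij'] by simp
  qed
qed

lemma nnd_sym_convex_comb:
  assumes A: "nnd_sym t A" and B: "nnd_sym t B" and u: "0 \<le> u" "u \<le> 1"
  shows "nnd_sym t (u \<cdot>\<^sub>m A + (1 - u) \<cdot>\<^sub>m B)"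
proof -
  have Ac: "A \<in> carrier_mat t t" and Bc: "B \<in> carrier_mat t t" using A B unfolding nnd_sym_def by auto
  have sym: "M $$ (j,i) = M $$ (i,j)" if "nnd_sym t M" "i < t" "j < t" for M i j
    using that unfolding nnd_sym_def by (metis carrier_matD index_transpose_mat(1))
  show ?thesis unfolding nnd_sym_def
  proof (intro conjI ballI)
    show "u \<cdot>\<^sub>m A + (1 - u) \<cdot>\<^sub>m B \<in> carrier_mat t t" using Ac Bc by simp
    show "transpose_mat (u \<cdot>\<^sub>m A + (1 - u) \<cdot>\<^sub>m B) = u \<cdot>\<^sub>m A + (1 - u) \<cdot>\<^sub>m B"
      using Ac Bc sym[OF A] sym[OF B] by (intro eq_matI) auto
    fix v :: "real vec" assume v: "v \<in> carrier_vec t"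
    have "v \<bullet> ((u \<cdot>\<^sub>m A + (1 - u) \<cdot>\<^sub>m B) *\<^sub>v v)
        = (\<Sum>i<t. \<Sum>j<t. v $ i * (u * A $$ (i,j) + (1 - u) * B $$ (i,j)) * v $ j)"
      using Ac Bc v by (subst quadratic_form_sum[of _ t]) (auto intro!: sum.cong)
    also have "\<dots> = u * (\<Sum>i<t. \<Sum>j<t. v $ i * A $$ (i,j) * v $ j)
        + (1 - u) * (\<Sum>i<t. \<Sum>j<t. v $ i * B $$ (i,j) * v $ j)"
      by (simp add: sum_distrib_left sum.distrib[symmetric] algebra_simps)
    also have "\<dots> = u * (v \<bullet> (A *\<^sub>v v)) + (1 - u) * (v \<bullet> (B *\<^sub>v v))"
      using Ac Bc v by (simp add: quadratic_form_sum)
    also have "\<dots> \<ge> 0" using A B v u unfolding nnd_sym_def by (intro add_nonneg_nonneg mult_nonneg_nonneg) auto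
    finally show "v \<bullet> ((u \<cdot>\<^sub>m A + (1 - u) \<cdot>\<^sub>m B) *\<^sub>v v) \<ge> 0" .
  qed
qed

definition mat_average :: "nat \<Rightarrow> 'i set \<Rightarrow> ('i \<Rightarrow> real mat) \<Rightarrow> real mat" where
  "mat_average t I C = mat t t (\<lambda>(a,b). (\<Sum>i\<in>I. C i $$ (a,b)) / card I)"

lemma ereal_convex_comb_le:
  assumes "x \<le> v" "y \<le> v" "0 \<le> u" "u \<le> 1"
  shows "ereal u * x + ereal (1 - u) * y \<le> v"
proof -
  have "ereal u * x + ereal (1 - u) * y \<le> ereal u * v + ereal (1 - u) * v"
    using assms by (intro add_mono ereal_mult_left_mono) auto
  also have "\<dots> = v"
    using assms by (cases v; cases "u = 0"; cases "u = 1") (auto simp: algebra_simps)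
  finally show ?thesis .
qed

lemma kiefer_criterion_convex:
  "kiefer_criterion t \<Phi> \<Longrightarrow> nnd_sym t A \<Longrightarrow> nnd_sym t B \<Longrightarrow> 0 < u \<Longrightarrow> u < 1 \<Longrightarrow>
    \<Phi> (u \<cdot>\<^sub>m A + (1 - u) \<cdot>\<^sub>m B) \<le> ereal u * \<Phi> A + ereal (1 - u) * \<Phi> B"
  unfolding kiefer_criterion_def by blast

lemma kiefer_criterion_smult_antimono:
  "kiefer_criterion t \<Phi> \<Longrightarrow> nnd_sym t C \<Longrightarrow> 0 \<le> a \<Longrightarrow> a \<le> a' \<Longrightarrow> \<Phi> (a' \<cdot>\<^sub>m C) \<le> \<Phi> (a \<cdot>\<^sub>m C)"
  unfolding kiefer_criterion_def by blast

text \<open>Jensen's inequality; in the induction step the new average is the convex combination of the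
  old one, with weight card I / (card I + 1), and the new matrix.\<close>

lemma kiefer_criterion_mat_average_le:
  assumes \<Phi>: "kiefer_criterion t \<Phi>" and I: "finite I" "I \<noteq> {}"
    and C: "\<And>i. i \<in> I \<Longrightarrow> nnd_sym t (C i) \<and> \<Phi> (C i) \<le> v"
  shows "nnd_sym t (mat_average t I C) \<and> \<Phi> (mat_average t I C) \<le> v"
  using I C
proof (induction I rule: finite_ne_induct)
  case (singleton x)
  have "mat_average t {x} C = C x"
    using singleton unfolding mat_average_def nnd_sym_def by (intro eq_matI) auto
  thus ?case using singleton by simp
next
  case (insert x I)
  define u :: real where "u = card I / (card I + 1)"
  have I: "card I > 0" using insert.hyps by (simp add: card_gt_0_iff)
  have u: "0 < u" "u < 1" unfolding u_def using I by auto
  have Cx: "C x \<in> carrier_mat t t" using insert.prems unfolding nnd_sym_def by auto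
  have avg: "mat_average t (insert x I) C = u \<cdot>\<^sub>m mat_average t I C + (1 - u) \<cdot>\<^sub>m C x"
  proof (rule eq_matI)
    fix a b assume "a < dim_row (u \<cdot>\<^sub>m mat_average t I C + (1 - u) \<cdot>\<^sub>m C x)"
      "b < dim_col (u \<cdot>\<^sub>m mat_average t I C + (1 - u) \<cdot>\<^sub>m C x)"
    hence "a < t" "b < t" using Cx by (auto simp: mat_average_def)
    moreover have "1 - u = 1 / (card I + 1)" unfolding u_def using I by (simp add: field_simps)
    ultimately show "mat_average t (insert x I) C $$ (a, b)
        = (u \<cdot>\<^sub>m mat_average t I C + (1 - u) \<cdot>\<^sub>m C x) $$ (a, b)"
      using insert.hyps I Cx unfolding mat_average_def by (simp add: u_def add_divide_distrib)
  qed (use Cx in \<open>auto simp: mat_average_def\<close>)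
  have IH: "nnd_sym t (mat_average t I C)" "\<Phi> (mat_average t I C) \<le> v"
    using insert.IH insert.prems by auto
  have "\<Phi> (mat_average t (insert x I) C) \<le> ereal u * \<Phi> (mat_average t I C) + ereal (1 - u) * \<Phi> (C x)"
    unfolding avg using kiefer_criterion_convex[OF \<Phi> IH(1)] insert.prems u by simp
  also have "\<dots> \<le> v" using IH(2) insert.prems u by (intro ereal_convex_comb_le) auto
  finally show ?case using nnd_sym_convex_comb[OF IH(1), of "C x" u] insert.prems u avg by auto
qed

definition permute_mat :: "nat \<Rightarrow> real mat \<Rightarrow> (nat \<Rightarrow> nat) \<Rightarrow> real mat" where
  "permute_mat t C p = mat t t (\<lambda>(i,j). C $$ (p i, p j))"

lemma kiefer_criterion_permute_mat:
  "kiefer_criterion t \<Phi> \<Longrightarrow> nnd_sym t C \<Longrightarrow> p permutes {..<t} \<Longrightarrow> \<Phi> (permute_mat t C p) = \<Phi> C"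
  unfolding kiefer_criterion_def permute_mat_def by blast

lemma nnd_sym_permute_mat:
  assumes C: "nnd_sym t C" and p: "p permutes {..<t}"
  shows "nnd_sym t (permute_mat t C p)"
proof -
  have Cc: "C \<in> carrier_mat t t" using C unfolding nnd_sym_def by auto
  have pt: "p i < t" if "i < t" for i using permutes_in_image[OF p, of i] that by simp
  have Csym: "C $$ (a, b) = C $$ (b, a)" if "a < t" "b < t" for a b
    using C that unfolding nnd_sym_def by (metis carrier_matD index_transpose_mat(1))
  have sum_p: "(\<Sum>i<t. f (p i)) = (\<Sum>i<t. f i)" for f :: "nat \<Rightarrow> real"
    using sum.permute[OF p, of f] by (simp add: comp_def)
  show ?thesis unfolding nnd_sym_def
  proof (intro conjI ballI)
    show "permute_mat t C p \<in> carrier_mat t t" unfolding permute_mat_def by simp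
    show "transpose_mat (permute_mat t C p) = permute_mat t C p"
      by (rule eq_matI) (auto simp: permute_mat_def pt Csym)
    fix v :: "real vec" assume v: "v \<in> carrier_vec t"
    define w where "w = vec t (\<lambda>a. v $ inv_into UNIV p a)"
    have w: "w \<in> carrier_vec t" unfolding w_def by simp
    have vw: "v $ i = w $ (p i)" if "i < t" for i
      unfolding w_def using pt[OF that] permutes_inverses(2)[OF p] by simp
    have "v \<bullet> (permute_mat t C p *\<^sub>v v) = (\<Sum>i<t. \<Sum>j<t. w $ (p i) * C $$ (p i, p j) * w $ (p j))"
      using v by (subst quadratic_form_sum[of _ t]) (auto simp: permute_mat_def vw intro!: sum.cong)
    also have "\<dots> = (\<Sum>i<t. \<Sum>j<t. w $ i * C $$ (i, j) * w $ j)"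
      by (simp only: sum_p[of "\<lambda>j. w $ (p _) * C $$ (p _, j) * w $ j"]
          sum_p[of "\<lambda>i. \<Sum>j<t. w $ i * C $$ (i, j) * w $ j"])
    also have "\<dots> = w \<bullet> (C *\<^sub>v w)" using Cc w by (simp add: quadratic_form_sum)
    finally show "v \<bullet> (permute_mat t C p *\<^sub>v v) \<ge> 0" using C w unfolding nnd_sym_def by auto
  qed
qed

definition symmetrize :: "nat \<Rightarrow> real mat \<Rightarrow> real mat" where
  "symmetrize t C = mat_average t {p. p permutes {..<t}} (permute_mat t C)"

lemma symmetrize_entry:
  "i < t \<Longrightarrow> j < t \<Longrightarrow>
    symmetrize t C $$ (i, j) = (\<Sum>p | p permutes {..<t}. C $$ (p i, p j)) / fact t"
  unfolding symmetrize_def mat_average_def permute_mat_def by (simp add: card_permutations)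

lemma exists_permutes_pair:
  assumes "i < t" "j < t" "i \<noteq> j" "i' < t" "j' < t" "i' \<noteq> j'"
  shows "\<exists>s. s permutes {..<t} \<and> s i = i' \<and> s j = j'"
proof -
  define \<tau> where "\<tau> = Transposition.transpose i i'"
  have \<tau>: "\<tau> permutes {..<t}" unfolding \<tau>_def using assms by (intro permutes_swap_id) auto
  have "\<tau> j \<noteq> i'" "\<tau> j < t" unfolding \<tau>_def using assms by (auto simp: transpose_def)
  hence "Transposition.transpose j' (\<tau> j) \<circ> \<tau> permutes {..<t}"
     "(Transposition.transpose j' (\<tau> j) \<circ> \<tau>) i = i'" "(Transposition.transpose j' (\<tau> j) \<circ> \<tau>) j = j'"
    using assms \<tau> by (auto intro: permutes_compose permutes_swap_id simp: \<tau>_def transpose_def)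
  thus ?thesis by blast
qed

lemma symmetrize_permute_invariant:
  assumes s: "s permutes {..<t}" and i: "i < t" and j: "j < t"
  shows "symmetrize t C $$ (s i, s j) = symmetrize t C $$ (i, j)"
proof -
  have "s i < t" "s j < t" using permutes_in_image[OF s] i j by auto
  hence "symmetrize t C $$ (s i, s j) = (\<Sum>p | p permutes {..<t}. C $$ ((p \<circ> s) i, (p \<circ> s) j)) / fact t"
    by (simp add: symmetrize_entry)
  also have "\<dots> = symmetrize t C $$ (i, j)"
    using sum_permutations_compose_right[OF s, of "\<lambda>p. C $$ (p i, p j)"] i j by (simp add: symmetrize_entry)
  finally show ?thesis .
qed

lemma completely_symmetric_symmetrize: "completely_symmetric t (symmetrize t C)"
  unfolding completely_symmetric_def
proof (intro conjI allI impI)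
  show "symmetrize t C \<in> carrier_mat t t" unfolding symmetrize_def mat_average_def by simp
  fix i j assume i: "i < t" and j: "j < t"
  have "Transposition.transpose i j permutes {..<t}" using i j by (intro permutes_swap_id) auto
  from symmetrize_permute_invariant[OF this i i]
  show "symmetrize t C $$ (i, i) = symmetrize t C $$ (j, j)" by simp
  fix i' j' assume "i' < t" "j' < t" "i \<noteq> j" "i' \<noteq> j'"
  then obtain s where "s permutes {..<t}" "s i = i'" "s j = j'"
    using exists_permutes_pair i j by blast
  thus "symmetrize t C $$ (i, j) = symmetrize t C $$ (i', j')"
    using symmetrize_permute_invariant i j by metis
qed

lemma zero_row_sums_symmetrize:
  assumes "zero_row_sums t C"
  shows "zero_row_sums t (symmetrize t C)"
  unfolding zero_row_sums_def
proof (intro allI impI)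
  fix i assume i: "i < t"
  have "(\<Sum>p | p permutes {..<t}. \<Sum>j<t. C $$ (p i, p j)) = 0"
  proof (rule sum.neutral, rule ballI)
    fix p assume "p \<in> {p. p permutes {..<t}}"
    hence p: "p permutes {..<t}" by simp
    have "(\<Sum>j<t. C $$ (p i, p j)) = (\<Sum>j<t. C $$ (p i, j))"
      using sum.permute[OF p, of "\<lambda>j. C $$ (p i, j)"] by (simp add: comp_def)
    thus "(\<Sum>j<t. C $$ (p i, p j)) = 0"
      using assms permutes_in_image[OF p] i unfolding zero_row_sums_def by simp
  qed
  thus "(\<Sum>j<t. symmetrize t C $$ (i, j)) = 0"
    using i by (simp add: symmetrize_entry sum.swap[of _ "{..<t}"] flip: sum_divide_distrib)
qed

lemma mat_trace_symmetrize:
  assumes C: "C \<in> carrier_mat t t"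
  shows "mat_trace (symmetrize t C) = mat_trace C"
proof -
  have "(\<Sum>i<t. C $$ (p i, p i)) = mat_trace C" if "p permutes {..<t}" for p
    using sum.permute[OF that, of "\<lambda>i. C $$ (i, i)"] C unfolding mat_trace_def by (simp add: comp_def)
  hence "(\<Sum>i<t. \<Sum>p | p permutes {..<t}. C $$ (p i, p i))
      = (\<Sum>p | p permutes {..<t}. mat_trace C)"
    by (subst sum.swap) (rule sum.cong, simp_all)
  also have "\<dots> = fact t * mat_trace C" by (simp add: card_permutations)
  finally have "(\<Sum>i<t. \<Sum>p | p permutes {..<t}. C $$ (p i, p i)) = fact t * mat_trace C" .
  moreover have "dim_row (symmetrize t C) = t" unfolding symmetrize_def mat_average_def by simp
  ultimately show ?thesis
    unfolding mat_trace_def by (simp add: symmetrize_entry flip: sum_divide_distrib)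
qed

lemma kiefer_criterion_symmetrize_le:
  assumes \<Phi>: "kiefer_criterion t \<Phi>" and C: "nnd_sym t C"
  shows "\<Phi> (symmetrize t C) \<le> \<Phi> C"
proof -
  have "finite {p. p permutes {..<t}}" "{p. p permutes {..<t}} \<noteq> {}"
    using finite_permutations[of "{..<t}"] permutes_id by (auto intro: exI[of _ id])
  moreover have "nnd_sym t (permute_mat t C p) \<and> \<Phi> (permute_mat t C p) \<le> \<Phi> C"
    if "p \<in> {p. p permutes {..<t}}" for p
    using nnd_sym_permute_mat[OF C] kiefer_criterion_permute_mat[OF \<Phi> C] that by simp
  ultimately show ?thesis
    unfolding symmetrize_def using kiefer_criterion_mat_average_le[OF \<Phi>] by blast
qed

text \<open>The symmetrization of a competitor C is no better than C, and it equals r Cs with r \<le> 1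
  because both are completely symmetric with zero row sums.\<close>

lemma kiefer_universal_optimality:
  assumes t: "2 \<le> t" and \<Phi>: "kiefer_criterion t \<Phi>"
    and Cs: "completely_symmetric t Cs" "zero_row_sums t Cs" "nnd_sym t Cs" "0 < mat_trace Cs"
    and C: "nnd_sym t C" "zero_row_sums t C" "mat_trace C \<le> mat_trace Cs"
  shows "\<Phi> Cs \<le> \<Phi> C"
proof -
  have Cc: "C \<in> carrier_mat t t" and Csc: "Cs \<in> carrier_mat t t" using C Cs unfolding nnd_sym_def by auto
  define r where "r = mat_trace C / mat_trace Cs"
  have "mat_trace C \<ge> 0" by (rule nnd_sym_mat_trace_nonneg[OF C(1)])
  hence r: "0 \<le> r" "r \<le> 1" unfolding r_def using Cs C by (auto simp: field_simps)
  have "completely_symmetric t (r \<cdot>\<^sub>m Cs)" by (rule completely_symmetric_smult[OF Cs(1)])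
  moreover have "zero_row_sums t (r \<cdot>\<^sub>m Cs)"
    using Cs(2) Csc unfolding zero_row_sums_def by (auto simp flip: sum_distrib_left)
  moreover have "mat_trace (r \<cdot>\<^sub>m Cs) = mat_trace (symmetrize t C)"
    using Cs(4) unfolding mat_trace_symmetrize[OF Cc] by (simp add: mat_trace_smult[OF Csc] r_def)
  ultimately have "r \<cdot>\<^sub>m Cs = symmetrize t C"
    using completely_symmetric_symmetrize zero_row_sums_symmetrize[OF C(2)] t
    by (intro completely_symmetric_eqI) auto
  have "1 \<cdot>\<^sub>m Cs = Cs" using Csc by (intro eq_matI) auto
  hence "\<Phi> Cs = \<Phi> (1 \<cdot>\<^sub>m Cs)" by simp
  also have "\<dots> \<le> \<Phi> (r \<cdot>\<^sub>m Cs)" by (rule kiefer_criterion_smult_antimono[OF \<Phi> Cs(3) r])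
  also have "\<dots> \<le> \<Phi> C" unfolding \<open>r \<cdot>\<^sub>m Cs = symmetrize t C\<close> by (rule kiefer_criterion_symmetrize_le[OF \<Phi> C(1)])
  finally show ?thesis .
qed

section \<open>The design matrices of model (M2)\<close>

lemma sum_blocks:
  fixes h :: "nat \<Rightarrow> 'a :: comm_monoid_add"
  shows "(\<Sum>r<b * k. h r) = (\<Sum>i<b. \<Sum>j<k. h (i * k + j))"
proof (induction b)
  case (Suc b)
  have "(\<Sum>r<m + n. h r) = (\<Sum>r<m. h r) + (\<Sum>j<n. h (m + j))" for m n
    by (induction n) (simp_all add: add.assoc)
  from this[of "b * k" k] show ?case using Suc by (simp add: add.commute)
qed simp

lemma block_index_less:
  fixes i j b k :: nat
  assumes "i < b" "j < k"
  shows "i * k + j < b * k"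
proof -
  have "i * k + j < Suc i * k" using assms by simp
  also have "\<dots> \<le> b * k" using assms by (intro mult_le_mono1) simp
  finally show ?thesis .
qed

lemma block_index_bounds:
  fixes r b k :: nat
  assumes "r < b * k"
  shows "r div k < b" and "r mod k < k"
proof -
  show "r div k < b" using assms by (simp add: less_mult_imp_div_less)
  show "r mod k < k" using assms by (cases "k = 0") auto
qed

lemma block_index_div_mod: "j < k \<Longrightarrow> (i * k + j) div k = i" "j < k \<Longrightarrow> (i * k + j) mod k = (j :: nat)"
  by simp_all

lemma sum_indicator_card: "(\<Sum>i<n. if P i then 1 else 0 :: real) = card {i. i < (n :: nat) \<and> P i}"
proof -
  have "(\<Sum>i<n. if P i then 1 else 0 :: real) = (\<Sum>i\<in>{i. i < n \<and> P i}. 1)"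
    by (rule sum.mono_neutral_cong_right) auto
  thus ?thesis by simp
qed

text \<open>Row r of the plot-indexed matrices is the inner plot (r div k + 1, r mod k + 1); for
  \<sigma> = 0, 1, 2, plot_trt k d \<sigma> r is the treatment on its left neighbour, on the plot itself and
  on its right neighbour.\<close>

definition plot_trt :: "nat \<Rightarrow> (nat \<Rightarrow> nat \<Rightarrow> nat) \<Rightarrow> nat \<Rightarrow> nat \<Rightarrow> nat" where
  "plot_trt k d \<sigma> r = d (r div k + 1) (r mod k + \<sigma>)"

lemma plot_trt_block: "j < k \<Longrightarrow> plot_trt k d \<sigma> (i * k + j) = d (i + 1) (j + \<sigma>)"
  unfolding plot_trt_def by simp

definition incid :: "nat \<Rightarrow> nat \<Rightarrow> real" where
  "incid x c = (if x = Suc c then 1 else 0)"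

lemma incid_square: "incid x a * incid x a = incid x a"
  unfolding incid_def by simp

lemma sum_incid: "x \<in> {1..t} \<Longrightarrow> (\<Sum>a<t. incid x a) = 1"
  unfolding incid_def by (cases x) auto

lemma Omega_plot_trt:
  assumes d: "d \<in> Omega t b k" and r: "r < b * k" and \<sigma>: "\<sigma> < 3"
  shows "plot_trt k d \<sigma> r \<in> {1..t}"
proof -
  have "r div k + 1 \<in> {1..b}" "r mod k + \<sigma> \<in> {0..k + 1}"
    using block_index_bounds[OF r] \<sigma> by auto
  thus ?thesis using d unfolding Omega_def is_design_def plot_trt_def by blast
qed

lemma treat_matrix_entry:
  assumes "r < b * k" "c < t" "-1 \<le> s"
  shows "treat_matrix t b k s d $$ (r, c) = incid (plot_trt k d (nat (s + 1)) r) c"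
proof -
  have "nat (int (r mod k + 1) + s) = r mod k + nat (s + 1)" using assms(3) by linarith
  thus ?thesis using assms unfolding treat_matrix_def incid_def plot_trt_def by simp
qed

lemma treat_matrix_carrier: "treat_matrix t b k s d \<in> carrier_mat (b * k) t"
  unfolding treat_matrix_def by simp

lemma T_mat_entry: "r < b * k \<Longrightarrow> c < t \<Longrightarrow> T_mat t b k d $$ (r, c) = incid (plot_trt k d 1 r) c"
  unfolding T_mat_def by (simp add: treat_matrix_entry)

lemma L_mat_entry: "r < b * k \<Longrightarrow> c < t \<Longrightarrow> L_mat t b k d $$ (r, c) = incid (plot_trt k d 0 r) c"
  unfolding L_mat_def by (simp add: treat_matrix_entry)

lemma R_mat_entry: "r < b * k \<Longrightarrow> c < t \<Longrightarrow> R_mat t b k d $$ (r, c) = incid (plot_trt k d 2 r) c"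
  unfolding R_mat_def by (simp add: treat_matrix_entry)

definition design_mat :: "nat \<Rightarrow> nat \<Rightarrow> nat \<Rightarrow> (nat \<Rightarrow> nat \<Rightarrow> nat) \<Rightarrow> real mat" where
  "design_mat t b k d = hconcat (hconcat (T_mat t b k d) (L_mat t b k d)) (R_mat t b k d)"

lemma design_mat_carrier: "design_mat t b k d \<in> carrier_mat (b * k) (3 * t)"
  unfolding design_mat_def T_mat_def L_mat_def R_mat_def
  using hconcat_carrier[OF hconcat_carrier treat_matrix_carrier] treat_matrix_carrier
  by (metis add.commute mult_2 mult_Suc numeral_2_eq_2 numeral_3_eq_3)

text \<open>The three column blocks T, L, R of the design matrix have offsets 1, 0, 2.\<close>

lemma design_mat_entry:
  assumes r: "r < b * k" and c: "c < t" and q: "q < 3"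
  shows "design_mat t b k d $$ (r, q * t + c) = incid (plot_trt k d ([1, 0, 2] ! q) r) c"
proof -
  have T: "T_mat t b k d \<in> carrier_mat (b * k) t" and L: "L_mat t b k d \<in> carrier_mat (b * k) t"
    and R: "R_mat t b k d \<in> carrier_mat (b * k) t"
    unfolding T_mat_def L_mat_def R_mat_def by (rule treat_matrix_carrier)+
  have TL: "hconcat (T_mat t b k d) (L_mat t b k d) \<in> carrier_mat (b * k) (t + t)"
    by (rule hconcat_carrier[OF T L])
  have "q = 0 \<or> q = 1 \<or> q = 2" using q by auto
  thus ?thesis using r c unfolding design_mat_def
    by (auto simp: index_hconcat[OF TL R] index_hconcat[OF T L] T_mat_entry L_mat_entry R_mat_entry)
qed

lemma design_mat_col:
  assumes s: "s < 3 * t"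
  shows "\<exists>\<sigma><3. \<forall>r<b * k. design_mat t b k d $$ (r, s) = incid (plot_trt k d \<sigma> r) (s mod t)"
proof -
  have q: "s div t < 3" and c: "s mod t < t" using s by (auto simp: less_mult_imp_div_less)
  have "[1, 0, 2] ! (s div t) < (3 :: nat)" using q by (auto simp: nth_Cons split: nat.split)
  moreover have "design_mat t b k d $$ (r, s) = incid (plot_trt k d ([1, 0, 2] ! (s div t)) r) (s mod t)"
    if "r < b * k" for r
    using design_mat_entry[OF that c q, of d] by simp
  ultimately show ?thesis by blast
qed

lemma K_mat_carrier: "K_mat t \<in> carrier_mat (3 * t) t"
  unfolding K_mat_def by simp

lemma K_mat_entry: "s < 3 * t \<Longrightarrow> c < t \<Longrightarrow> K_mat t $$ (s, c) = (if s mod t = c then 1 else 0)"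
  unfolding K_mat_def by simp

lemma transpose_K_mult_K: "transpose_mat (K_mat t) * K_mat t = 3 \<cdot>\<^sub>m 1\<^sub>m t"
proof (rule eq_matI)
  fix i j assume "i < dim_row (3 \<cdot>\<^sub>m 1\<^sub>m t :: real mat)" "j < dim_col (3 \<cdot>\<^sub>m 1\<^sub>m t :: real mat)"
  hence ij: "i < t" "j < t" by auto
  have "(transpose_mat (K_mat t) * K_mat t) $$ (i, j) = (\<Sum>s<3 * t. K_mat t $$ (s, i) * K_mat t $$ (s, j))"
    using ij K_mat_carrier[of t] by (simp add: scalar_prod_def lessThan_atLeast0)
  also have "\<dots> = (\<Sum>q<(3::nat). \<Sum>l<t. if l = i then (if i = j then 1 else 0) else 0)"
    unfolding sum_blocks[of _ 3 t] using ij by (intro sum.cong refl) (auto simp: K_mat_entry block_index_less)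
  also have "\<dots> = (3 \<cdot>\<^sub>m 1\<^sub>m t :: real mat) $$ (i, j)" using ij by simp
  finally show "(transpose_mat (K_mat t) * K_mat t) $$ (i, j) = (3 \<cdot>\<^sub>m 1\<^sub>m t :: real mat) $$ (i, j)" .
qed (use K_mat_carrier[of t] in auto)

lemma smult_one_mat_mult: "(a \<cdot>\<^sub>m 1\<^sub>m n) * (c \<cdot>\<^sub>m 1\<^sub>m n) = ((a * c) :: real) \<cdot>\<^sub>m 1\<^sub>m n"
proof -
  have "(a \<cdot>\<^sub>m 1\<^sub>m n) * (c \<cdot>\<^sub>m 1\<^sub>m n) = a \<cdot>\<^sub>m (1\<^sub>m n * (c \<cdot>\<^sub>m 1\<^sub>m n))"
    by (rule mult_smult_assoc_mat) auto
  also have "\<dots> = (a * c) \<cdot>\<^sub>m 1\<^sub>m n" by (intro eq_matI) auto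
  finally show ?thesis .
qed

lemma transpose_smult_one_mat: "transpose_mat (a \<cdot>\<^sub>m 1\<^sub>m n) = a \<cdot>\<^sub>m 1\<^sub>m n"
  by (rule eq_matI) auto

lemma mp_inverse_KtK: "mp_inverse (transpose_mat (K_mat t) * K_mat t) = (1/3) \<cdot>\<^sub>m 1\<^sub>m t"
  unfolding transpose_K_mult_K
  by (rule mp_inverse_eqI) (simp add: penrose_inverse_def smult_one_mat_mult transpose_smult_one_mat)

definition X1_mat :: "nat \<Rightarrow> nat \<Rightarrow> nat \<Rightarrow> (nat \<Rightarrow> nat \<Rightarrow> nat) \<Rightarrow> real mat" where
  "X1_mat t b k d = mat (b * k) t (\<lambda>(r, c). (\<Sum>\<sigma><3. incid (plot_trt k d \<sigma> r) c) / 3)"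

lemma X1_mat_carrier: "X1_mat t b k d \<in> carrier_mat (b * k) t"
  unfolding X1_mat_def by simp

lemma X1_mat_entry: "r < b * k \<Longrightarrow> c < t \<Longrightarrow> X1_mat t b k d $$ (r, c) = (\<Sum>\<sigma><3. incid (plot_trt k d \<sigma> r) c) / 3"
  unfolding X1_mat_def by simp

lemma design_mat_mult_K_entry:
  assumes r: "r < b * k" and c: "c < t"
  shows "(design_mat t b k d * K_mat t) $$ (r, c) = (\<Sum>\<sigma><3. incid (plot_trt k d \<sigma> r) c)"
proof -
  have "(design_mat t b k d * K_mat t) $$ (r, c) = (\<Sum>s<3 * t. design_mat t b k d $$ (r, s) * K_mat t $$ (s, c))"
    using r c design_mat_carrier[of t b k d] K_mat_carrier[of t] by (simp add: scalar_prod_def lessThan_atLeast0)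
  also have "\<dots> = (\<Sum>q<3. \<Sum>j<t. design_mat t b k d $$ (r, q * t + j) * (if j = c then 1 else 0))"
    unfolding sum_blocks[of _ 3 t] using c by (intro sum.cong refl) (auto simp: K_mat_entry block_index_less)
  also have "\<dots> = (\<Sum>q<3. incid (plot_trt k d ([1, 0, 2] ! q) r) c)"
    using r c by (simp add: if_distrib[of "\<lambda>x. _ * x"] design_mat_entry cong: if_cong)
  also have "\<dots> = (\<Sum>\<sigma><3. incid (plot_trt k d \<sigma> r) c)" by (simp add: eval_nat_numeral)
  finally show ?thesis .
qed

lemma design_mat_mult_K: "design_mat t b k d * K_mat t * mp_inverse (transpose_mat (K_mat t) * K_mat t) = X1_mat t b k d"
proof -
  have AK: "design_mat t b k d * K_mat t \<in> carrier_mat (b * k) t"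
    using design_mat_carrier K_mat_carrier by (rule mult_carrier_mat)
  have "design_mat t b k d * K_mat t * ((1/3) \<cdot>\<^sub>m 1\<^sub>m t) = (1/3) \<cdot>\<^sub>m (design_mat t b k d * K_mat t * 1\<^sub>m t)"
    by (rule mult_smult_distrib[OF AK one_carrier_mat])
  also have "\<dots> = (1/3) \<cdot>\<^sub>m (design_mat t b k d * K_mat t)" by (simp add: right_mult_one_mat[OF AK])
  also have "\<dots> = X1_mat t b k d"
    using AK carrier_matD[OF AK] by (intro eq_matI) (auto simp: X1_mat_def design_mat_mult_K_entry simp del: index_mult_mat)
  finally show ?thesis unfolding mp_inverse_KtK .
qed

definition M_mat :: "nat \<Rightarrow> real mat" where
  "M_mat t = 1\<^sub>m (3 * t) - K_mat t * ((1/3) \<cdot>\<^sub>m 1\<^sub>m t) * transpose_mat (K_mat t)"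

lemma M_mat_carrier: "M_mat t \<in> carrier_mat (3 * t) (3 * t)"
  unfolding M_mat_def using K_mat_carrier[of t] by (intro minus_carrier_mat) auto

lemma M_mat_symmetric: "transpose_mat (M_mat t) = M_mat t"
  unfolding M_mat_def using K_mat_carrier[of t]
  by (subst transpose_minus[of _ "3 * t" "3 * t"])
     (auto simp: transpose_mult_dim assoc_mult_mat_dim transpose_smult_one_mat simp del: assoc_mult_mat)

lemma M_mat_mult_K: "M_mat t * K_mat t = 0\<^sub>m (3 * t) t"
proof -
  have K: "K_mat t \<in> carrier_mat (3 * t) t" by (rule K_mat_carrier)
  have "K_mat t * ((1/3) \<cdot>\<^sub>m 1\<^sub>m t) * transpose_mat (K_mat t) * K_mat t
      = K_mat t * (((1/3) \<cdot>\<^sub>m 1\<^sub>m t) * (transpose_mat (K_mat t) * K_mat t))"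
    using K by (simp add: assoc_mult_mat_dim del: assoc_mult_mat)
  also have "\<dots> = K_mat t * 1\<^sub>m t"
    unfolding transpose_K_mult_K smult_one_mat_mult by (intro arg_cong[where f = "(*) _"] eq_matI) auto
  also have "\<dots> = K_mat t" using K by simp
  finally show ?thesis unfolding M_mat_def using K by (simp add: minus_mult_distrib_dim)
qed

lemma C_total_eq:
  "C_total t b k d = transpose_mat (X1_mat t b k d) *
      proj_perp (hconcat (design_mat t b k d * M_mat t) (block_matrix b k)) * X1_mat t b k d"
proof -
  have "dim_row (K_mat t) = 3 * t" using K_mat_carrier[of t] by simp
  hence "1\<^sub>m (dim_row (K_mat t)) - K_mat t * mp_inverse (transpose_mat (K_mat t) * K_mat t)
      * transpose_mat (K_mat t) = M_mat t"
    unfolding M_mat_def mp_inverse_KtK by simp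
  thus ?thesis unfolding C_total_def info_subsystem_def Let_def design_mat_mult_K[unfolded design_mat_def]
    by (simp add: design_mat_def)
qed

lemma block_matrix_carrier: "block_matrix b k \<in> carrier_mat (b * k) b"
  unfolding block_matrix_def by simp

lemma transpose_block_matrix_mult: "transpose_mat (block_matrix b k) * block_matrix b k = real k \<cdot>\<^sub>m 1\<^sub>m b"
proof (rule eq_matI)
  fix i j assume "i < dim_row (real k \<cdot>\<^sub>m 1\<^sub>m b)" "j < dim_col (real k \<cdot>\<^sub>m 1\<^sub>m b)"
  hence ij: "i < b" "j < b" by auto
  have "(transpose_mat (block_matrix b k) * block_matrix b k) $$ (i, j)
      = (\<Sum>r<b * k. (if r div k = i then 1 else 0) * (if r div k = j then 1 else 0))"
    using ij by (simp add: scalar_prod_def lessThan_atLeast0 block_matrix_def less_mult_imp_div_less)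
  also have "\<dots> = (\<Sum>i'<b. if i' = i then (if i = j then real k else 0) else 0)"
    unfolding sum_blocks by (intro sum.cong refl) auto
  also have "\<dots> = (real k \<cdot>\<^sub>m 1\<^sub>m b) $$ (i, j)" using ij by simp
  finally show "(transpose_mat (block_matrix b k) * block_matrix b k) $$ (i, j) = (real k \<cdot>\<^sub>m 1\<^sub>m b) $$ (i, j)" .
qed (use block_matrix_carrier[of b k] in auto)

definition block_avg_mat :: "nat \<Rightarrow> nat \<Rightarrow> real mat" where
  "block_avg_mat b k = block_matrix b k * ((1 / k) \<cdot>\<^sub>m transpose_mat (block_matrix b k))"

lemma block_avg_mat_carrier: "block_avg_mat b k \<in> carrier_mat (b * k) (b * k)"
  unfolding block_avg_mat_def using block_matrix_carrier[of b k] by simp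

lemma block_avg_mat_entry:
  assumes "r < b * k" "r' < b * k"
  shows "block_avg_mat b k $$ (r, r') = (if r div k = r' div k then 1 / k else 0)"
proof -
  have "block_avg_mat b k $$ (r, r') = (\<Sum>i<b. (if r div k = i then 1 else 0) * (1 / k * (if r' div k = i then 1 else 0)))"
    using assms block_matrix_carrier[of b k]
    by (simp add: block_avg_mat_def scalar_prod_def lessThan_atLeast0 block_matrix_def)
  also have "\<dots> = (\<Sum>i<b. if i = r div k then (if r div k = r' div k then 1 / k else 0) else 0)"
    by (intro sum.cong refl) auto
  finally show ?thesis using assms by (simp add: less_mult_imp_div_less)
qed

lemma orth_projector_block_avg_mat:
  assumes k: "0 < k"
  shows "orth_projector (b * k) (block_avg_mat b k)"
proof -
  define B where "B = block_matrix b k"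
  have B: "B \<in> carrier_mat (b * k) b" unfolding B_def by (rule block_matrix_carrier)
  have "((1 / k) \<cdot>\<^sub>m transpose_mat B) * B = (1 / k) \<cdot>\<^sub>m (transpose_mat B * B)"
    by (rule mult_smult_assoc_mat) (use B in auto)
  also have "\<dots> = 1\<^sub>m b" unfolding B_def transpose_block_matrix_mult using k by (intro eq_matI) auto
  finally have FB: "((1 / k) \<cdot>\<^sub>m transpose_mat B) * B = 1\<^sub>m b" .
  have "block_avg_mat b k * block_avg_mat b k
      = B * (((1 / k) \<cdot>\<^sub>m transpose_mat B) * B) * ((1 / k) \<cdot>\<^sub>m transpose_mat B)"
    unfolding block_avg_mat_def B_def[symmetric] using B by (simp add: assoc_mult_mat_dim del: assoc_mult_mat)
  also have "\<dots> = block_avg_mat b k" unfolding FB block_avg_mat_def B_def[symmetric] using B by simp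
  finally have "block_avg_mat b k * block_avg_mat b k = block_avg_mat b k" .
  moreover have "transpose_mat (block_avg_mat b k) = block_avg_mat b k"
    using block_avg_mat_carrier[of b k] by (intro eq_matI) (auto simp: block_avg_mat_entry)
  ultimately show ?thesis unfolding orth_projector_def using block_avg_mat_carrier[of b k] by blast
qed

lemma proj_hconcat_mult_block_avg_mat:
  assumes U: "U \<in> carrier_mat (b * k) q"
  shows "proj (hconcat U (block_matrix b k)) * block_avg_mat b k = block_avg_mat b k"
proof -
  have P: "proj (hconcat U (block_matrix b k)) \<in> carrier_mat (b * k) (b * k)"
    using orth_projector_proj(1)[OF hconcat_carrier[OF U block_matrix_carrier]]
    unfolding orth_projector_def by simp
  thus ?thesis unfolding block_avg_mat_def
    using proj_hconcat_mult_right[OF U block_matrix_carrier] block_matrix_carrier[of b k]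
    by (simp flip: assoc_mult_mat[OF P block_matrix_carrier, of _ "b * k"])
qed

lemma transpose_block_matrix_mult_complement:
  assumes k: "0 < k" and X: "X \<in> carrier_mat (b * k) t"
  shows "transpose_mat (block_matrix b k) * ((1\<^sub>m (b * k) - block_avg_mat b k) * X) = 0\<^sub>m b t"
proof -
  define B where "B = block_matrix b k"
  have B: "B \<in> carrier_mat (b * k) b" unfolding B_def by (rule block_matrix_carrier)
  have "transpose_mat B * block_avg_mat b k = (transpose_mat B * B) * ((1 / k) \<cdot>\<^sub>m transpose_mat B)"
    unfolding block_avg_mat_def B_def[symmetric] using B by (simp add: assoc_mult_mat_dim del: assoc_mult_mat)
  also have "\<dots> = (k * (1 / k)) \<cdot>\<^sub>m transpose_mat B"
    unfolding B_def transpose_block_matrix_mult using block_matrix_carrier[of b k]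
    by (intro eq_matI) (auto simp: scalar_prod_def lessThan_atLeast0 if_distrib[of "\<lambda>x. x * _"] cong: if_cong)
  also have "\<dots> = transpose_mat B" using k by (intro eq_matI) auto
  finally have "transpose_mat B * (1\<^sub>m (b * k) - block_avg_mat b k) = 0\<^sub>m b (b * k)"
    using B block_avg_mat_carrier[of b k] by (simp add: mult_minus_distrib_dim)
  moreover have "transpose_mat B * ((1\<^sub>m (b * k) - block_avg_mat b k) * X)
      = transpose_mat B * (1\<^sub>m (b * k) - block_avg_mat b k) * X"
    using B X block_avg_mat_carrier[of b k] by (simp add: assoc_mult_mat_dim del: assoc_mult_mat)
  ultimately show ?thesis unfolding B_def[symmetric] using X by simp
qed

definition block_sum :: "nat \<Rightarrow> (nat \<Rightarrow> real) \<Rightarrow> nat \<Rightarrow> real" where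
  "block_sum k f i = (\<Sum>j<k. f (i * k + j))"

lemma sum_same_block:
  assumes r: "r < b * k"
  shows "(\<Sum>r'<b * k. if r div k = r' div k then g r' else 0) = block_sum k g (r div k)"
proof -
  have "(\<Sum>r'<b * k. if r div k = r' div k then g r' else 0)
      = (\<Sum>i<b. if i = r div k then block_sum k g i else 0)"
    unfolding sum_blocks block_sum_def by (intro sum.cong refl) auto
  thus ?thesis using r by (simp add: less_mult_imp_div_less)
qed

lemma sum_mult_block_index:
  "(\<Sum>r<b * k. f r * g (r div k)) = (\<Sum>i<b. block_sum k f i * g i)"
  unfolding sum_blocks block_sum_def sum_distrib_right by (intro sum.cong refl) simp

lemma block_avg_complement_mult_entry:
  assumes X: "X \<in> carrier_mat (b * k) t" and r: "r < b * k" and c: "c < t"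
  shows "((1\<^sub>m (b * k) - block_avg_mat b k) * X) $$ (r, c)
    = X $$ (r, c) - block_sum k (\<lambda>r'. X $$ (r', c)) (r div k) / k"
proof -
  have "((1\<^sub>m (b * k) - block_avg_mat b k) * X) $$ (r, c)
      = (\<Sum>r'<b * k. (if r = r' then X $$ (r', c) else 0) - (if r div k = r' div k then X $$ (r', c) / k else 0))"
    using X r c block_avg_mat_carrier[of b k]
    by (auto simp: scalar_prod_def lessThan_atLeast0 block_avg_mat_entry algebra_simps intro!: sum.cong)
  also have "\<dots> = X $$ (r, c) - block_sum k (\<lambda>r'. X $$ (r', c) / k) (r div k)"
    using r by (simp add: sum_subtractf sum_same_block[OF r])
  finally show ?thesis by (simp add: block_sum_def sum_divide_distrib)
qed

lemma sum_mult_block_avg_complement: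
  assumes X: "X \<in> carrier_mat (b * k) t" and c: "c < t"
  shows "(\<Sum>r<b * k. f r * ((1\<^sub>m (b * k) - block_avg_mat b k) * X) $$ (r, c))
    = (\<Sum>r<b * k. f r * X $$ (r, c)) - (\<Sum>i<b. block_sum k f i * block_sum k (\<lambda>r. X $$ (r, c)) i) / k"
proof -
  have "(\<Sum>r<b * k. f r * ((1\<^sub>m (b * k) - block_avg_mat b k) * X) $$ (r, c))
      = (\<Sum>r<b * k. f r * X $$ (r, c)) - (\<Sum>r<b * k. f r * (block_sum k (\<lambda>r. X $$ (r, c)) (r div k) / k))"
    using X c by (simp add: block_avg_complement_mult_entry right_diff_distrib sum_subtractf)
  also have "(\<Sum>r<b * k. f r * (block_sum k (\<lambda>r. X $$ (r, c)) (r div k) / k))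
      = (\<Sum>i<b. block_sum k f i * (block_sum k (\<lambda>r. X $$ (r, c)) i / k))"
    by (rule sum_mult_block_index)
  also have "\<dots> = (\<Sum>i<b. block_sum k f i * block_sum k (\<lambda>r. X $$ (r, c)) i) / k"
    by (simp add: sum_divide_distrib)
  finally show ?thesis .
qed

lemma block_avg_complement_quadratic_entry:
  assumes X: "X \<in> carrier_mat (b * k) t" and a: "a < t" and c: "c < t"
  shows "(transpose_mat X * (1\<^sub>m (b * k) - block_avg_mat b k) * X) $$ (a, c)
    = (\<Sum>r<b * k. X $$ (r, a) * X $$ (r, c))
      - (\<Sum>i<b. block_sum k (\<lambda>r. X $$ (r, a)) i * block_sum k (\<lambda>r. X $$ (r, c)) i) / k"
proof -
  have R: "1\<^sub>m (b * k) - block_avg_mat b k \<in> carrier_mat (b * k) (b * k)"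
    using block_avg_mat_carrier by (rule minus_carrier_mat)
  have "(transpose_mat X * (1\<^sub>m (b * k) - block_avg_mat b k) * X) $$ (a, c)
      = (transpose_mat X * ((1\<^sub>m (b * k) - block_avg_mat b k) * X)) $$ (a, c)"
    by (subst assoc_mult_mat[of _ t "b * k" _ "b * k" _ t]) (use X R in auto)
  also have "\<dots> = (\<Sum>r<b * k. X $$ (r, a) * ((1\<^sub>m (b * k) - block_avg_mat b k) * X) $$ (r, c))"
    using X R a c by (intro index_transpose_mult) auto
  finally have "(transpose_mat X * (1\<^sub>m (b * k) - block_avg_mat b k) * X) $$ (a, c)
      = (\<Sum>r<b * k. X $$ (r, a) * ((1\<^sub>m (b * k) - block_avg_mat b k) * X) $$ (r, c))" .
  thus ?thesis using sum_mult_block_avg_complement[OF X c] by simp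
qed

definition block_info_mat :: "nat \<Rightarrow> nat \<Rightarrow> nat \<Rightarrow> (nat \<Rightarrow> nat \<Rightarrow> nat) \<Rightarrow> real mat" where
  "block_info_mat t b k d =
     transpose_mat (X1_mat t b k d) * (1\<^sub>m (b * k) - block_avg_mat b k) * X1_mat t b k d"

lemma block_info_mat_carrier: "block_info_mat t b k d \<in> carrier_mat t t"
  unfolding block_info_mat_def using X1_mat_carrier block_avg_mat_carrier
  by (intro mult_carrier_mat[OF mult_carrier_mat[OF _ minus_carrier_mat]]) auto

lemma X1_mat_mult_ones:
  assumes d: "d \<in> Omega t b k"
  shows "X1_mat t b k d *\<^sub>v ones_vec t = block_matrix b k *\<^sub>v ones_vec b"
proof (rule eq_vecI)
  fix r assume "r < dim_vec (block_matrix b k *\<^sub>v ones_vec b)"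
  hence r: "r < b * k" using block_matrix_carrier[of b k] by simp
  have "(X1_mat t b k d *\<^sub>v ones_vec t) $ r = (\<Sum>\<sigma><3. \<Sum>c<t. incid (plot_trt k d \<sigma> r) c) / 3"
    using r by (simp add: X1_mat_def ones_vec_def scalar_prod_def atLeast0LessThan flip: sum_divide_distrib)
      (rule sum.swap)
  also have "\<dots> = 1" using Omega_plot_trt[OF d r] by (simp add: sum_incid)
  also have "\<dots> = (\<Sum>i<b. if r div k = i then 1 else 0)" using r by (simp add: less_mult_imp_div_less)
  also have "\<dots> = (block_matrix b k *\<^sub>v ones_vec b) $ r"
    using r by (simp add: block_matrix_def ones_vec_def scalar_prod_def lessThan_atLeast0)
  finally show "(X1_mat t b k d *\<^sub>v ones_vec t) $ r = (block_matrix b k *\<^sub>v ones_vec b) $ r" .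
qed (simp add: X1_mat_def block_matrix_def)

lemma design_mat_M_carrier: "design_mat t b k d * M_mat t \<in> carrier_mat (b * k) (3 * t)"
  using design_mat_carrier M_mat_carrier by (rule mult_carrier_mat)

lemma nnd_sym_C_total: "nnd_sym t (C_total t b k d)"
  unfolding C_total_eq
  by (rule nnd_sym_info_matrix[OF X1_mat_carrier hconcat_carrier[OF design_mat_M_carrier block_matrix_carrier]])

lemma zero_row_sums_C_total:
  assumes d: "d \<in> Omega t b k"
  shows "zero_row_sums t (C_total t b k d)"
proof (rule zero_row_sumsI)
  show "C_total t b k d \<in> carrier_mat t t" using nnd_sym_C_total unfolding nnd_sym_def by blast
  show "C_total t b k d *\<^sub>v ones_vec t = 0\<^sub>v t"
    unfolding C_total_eq
    by (rule info_matrix_mult_vec_eq_0[OF X1_mat_carrier hconcat_carrier[OF design_mat_M_carrier block_matrix_carrier]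
          block_matrix_carrier proj_hconcat_mult_right[OF design_mat_M_carrier block_matrix_carrier] _ _
          X1_mat_mult_ones[OF d]]) (simp_all add: ones_vec_def)
qed

lemma mat_trace_C_total_le:
  assumes k: "0 < k"
  shows "mat_trace (C_total t b k d) \<le> mat_trace (block_info_mat t b k d)"
  unfolding C_total_eq block_info_mat_def
  by (rule mat_trace_info_matrix_le[OF X1_mat_carrier hconcat_carrier[OF design_mat_M_carrier block_matrix_carrier]
        orth_projector_block_avg_mat[OF k] proj_hconcat_mult_block_avg_mat[OF design_mat_M_carrier]])

lemma transpose_design_mat_mult:
  assumes W: "W \<in> carrier_mat (b * k) t'"
    and H: "\<And>\<sigma> a c. \<sigma> < 3 \<Longrightarrow> a < t \<Longrightarrow> c < t' \<Longrightarrow>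
      (\<Sum>r<b * k. incid (plot_trt k d \<sigma> r) a * W $$ (r, c)) = H a c"
  shows "transpose_mat (design_mat t b k d) * W = K_mat t * mat t t' (\<lambda>(a, c). H a c)"
proof (rule eq_matI)
  fix s c assume "s < dim_row (K_mat t * mat t t' (\<lambda>(a, c). H a c))" "c < dim_col (K_mat t * mat t t' (\<lambda>(a, c). H a c))"
  hence s: "s < 3 * t" and c: "c < t'" using K_mat_carrier[of t] by auto
  then obtain \<sigma> where \<sigma>: "\<sigma> < 3" and A: "\<forall>r<b * k. design_mat t b k d $$ (r, s) = incid (plot_trt k d \<sigma> r) (s mod t)"
    using design_mat_col by blast
  have t: "s mod t < t" using s by simp
  have "(transpose_mat (design_mat t b k d) * W) $$ (s, c) = (\<Sum>r<b * k. design_mat t b k d $$ (r, s) * W $$ (r, c))"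
    using design_mat_carrier W s c by (intro index_transpose_mult)
  also have "\<dots> = H (s mod t) c" using A H[OF \<sigma> t c] by simp
  also have "\<dots> = (\<Sum>a<t. K_mat t $$ (s, a) * mat t t' (\<lambda>(a, c). H a c) $$ (a, c))"
    using s c t by (simp add: K_mat_entry if_distrib[of "\<lambda>x. x * _"] cong: if_cong)
  also have "\<dots> = (K_mat t * mat t t' (\<lambda>(a, c). H a c)) $$ (s, c)"
    using K_mat_carrier[of t] s c by (simp add: scalar_prod_def lessThan_atLeast0)
  finally show "(transpose_mat (design_mat t b k d) * W) $$ (s, c) = (K_mat t * mat t t' (\<lambda>(a, c). H a c)) $$ (s, c)" .
qed (use design_mat_carrier[of t b k d] K_mat_carrier[of t] W in auto)

lemma transpose_design_mat_M_mult_eq_0: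
  assumes W: "W \<in> carrier_mat (b * k) t'"
    and H: "\<And>\<sigma> a c. \<sigma> < 3 \<Longrightarrow> a < t \<Longrightarrow> c < t' \<Longrightarrow>
      (\<Sum>r<b * k. incid (plot_trt k d \<sigma> r) a * W $$ (r, c)) = H a c"
  shows "transpose_mat (design_mat t b k d * M_mat t) * W = 0\<^sub>m (3 * t) t'"
proof -
  have "transpose_mat (design_mat t b k d * M_mat t) * W = M_mat t * (transpose_mat (design_mat t b k d) * W)"
    using design_mat_carrier[of t b k d] M_mat_carrier[of t] W M_mat_symmetric[of t]
    by (simp add: transpose_mult_dim assoc_mult_mat_dim del: assoc_mult_mat)
  also have "\<dots> = M_mat t * (K_mat t * mat t t' (\<lambda>(a, c). H a c))"
    using transpose_design_mat_mult[OF W H] by simp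
  also have "\<dots> = (M_mat t * K_mat t) * mat t t' (\<lambda>(a, c). H a c)"
    using M_mat_carrier[of t] K_mat_carrier[of t] by (simp add: assoc_mult_mat_dim del: assoc_mult_mat)
  finally show ?thesis by (simp add: M_mat_mult_K)
qed

section \<open>Neighbour counts\<close>

lemma sum_cyclic_shift:
  fixes h :: "nat \<Rightarrow> 'a :: cancel_comm_monoid_add"
  assumes "h 0 = h k"
  shows "(\<Sum>j<k. h j) = (\<Sum>j<k. h (Suc j))"
proof -
  have "(\<Sum>j<k. h j) + h k = (\<Sum>j<k. h (Suc j)) + h 0"
    by (metis add.commute sum.lessThan_Suc sum.lessThan_Suc_shift)
  thus ?thesis using assms by simp
qed

text \<open>Circularity makes every within-block sum invariant under moving both positions one plot to
  the right.\<close>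

lemma block_sum_plot_trt_shift:
  fixes g :: "nat \<Rightarrow> nat \<Rightarrow> 'a :: cancel_comm_monoid_add"
  assumes d: "circular b k d" and i: "i < b" and \<sigma>: "\<sigma> \<le> 1" "\<sigma>' \<le> 1"
  shows "(\<Sum>j<k. g (plot_trt k d \<sigma> (i * k + j)) (plot_trt k d \<sigma>' (i * k + j)))
    = (\<Sum>j<k. g (plot_trt k d (\<sigma> + 1) (i * k + j)) (plot_trt k d (\<sigma>' + 1) (i * k + j)))"
proof -
  have "d (i + 1) 0 = d (i + 1) k" "d (i + 1) (k + 1) = d (i + 1) 1"
    using d i unfolding circular_def by auto
  hence "d (i + 1) s = d (i + 1) (k + s)" if "s \<le> 1" for s
    using that by (cases s) auto
  hence "d (i + 1) (0 + \<sigma>) = d (i + 1) (k + \<sigma>)" "d (i + 1) (0 + \<sigma>') = d (i + 1) (k + \<sigma>')"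
    using \<sigma> by simp_all
  hence "g (d (i + 1) (0 + \<sigma>)) (d (i + 1) (0 + \<sigma>')) = g (d (i + 1) (k + \<sigma>)) (d (i + 1) (k + \<sigma>'))"
    by (simp only:)
  from sum_cyclic_shift[where h = "\<lambda>j. g (d (i + 1) (j + \<sigma>)) (d (i + 1) (j + \<sigma>'))", OF this]
  show ?thesis by (simp add: plot_trt_block)
qed

lemma sum_plot_trt_shift:
  fixes g :: "nat \<Rightarrow> nat \<Rightarrow> 'a :: cancel_comm_monoid_add"
  assumes d: "circular b k d" and \<sigma>: "\<sigma> \<le> 1" "\<sigma>' \<le> 1"
  shows "(\<Sum>r<b * k. g (plot_trt k d \<sigma> r) (plot_trt k d \<sigma>' r))
    = (\<Sum>r<b * k. g (plot_trt k d (\<sigma> + 1) r) (plot_trt k d (\<sigma>' + 1) r))"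
  unfolding sum_blocks by (intro sum.cong refl block_sum_plot_trt_shift[OF d _ \<sigma>]) simp

definition nbr_count :: "nat \<Rightarrow> nat \<Rightarrow> (nat \<Rightarrow> nat \<Rightarrow> nat) \<Rightarrow> nat \<Rightarrow> nat \<Rightarrow> nat \<Rightarrow> nat \<Rightarrow> real" where
  "nbr_count b k d \<sigma> \<sigma>' a c = (\<Sum>r<b * k. incid (plot_trt k d \<sigma> r) a * incid (plot_trt k d \<sigma>' r) c)"

lemma nbr_count_swap: "nbr_count b k d \<sigma>' \<sigma> c a = nbr_count b k d \<sigma> \<sigma>' a c"
  unfolding nbr_count_def by (simp add: mult.commute)

lemma nbr_count_shift:
  "circular b k d \<Longrightarrow> \<sigma> \<le> 1 \<Longrightarrow> \<sigma>' \<le> 1 \<Longrightarrow>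
    nbr_count b k d (\<sigma> + 1) (\<sigma>' + 1) a c = nbr_count b k d \<sigma> \<sigma>' a c"
  unfolding nbr_count_def by (rule sum_plot_trt_shift[symmetric])

text \<open>The nine counts for the positions 0, 1, 2 reduce to the replications (on the diagonal) and to
  the neighbour counts at distance 1 and 2.\<close>

lemma sum_nbr_count:
  assumes d: "circular b k d"
  shows "(\<Sum>\<sigma><3. \<Sum>\<sigma>'<3. nbr_count b k d \<sigma> \<sigma>' a c) = 3 * nbr_count b k d 1 1 a c
    + 2 * nbr_count b k d 1 2 a c + 2 * nbr_count b k d 1 2 c a + nbr_count b k d 0 2 a c + nbr_count b k d 0 2 c a"
proof -
  have "nbr_count b k d 0 0 a c = nbr_count b k d 1 1 a c" "nbr_count b k d 2 2 a c = nbr_count b k d 1 1 a c"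
    "nbr_count b k d 0 1 a c = nbr_count b k d 1 2 a c" "nbr_count b k d 2 1 a c = nbr_count b k d 1 2 c a"
    "nbr_count b k d 1 0 a c = nbr_count b k d 1 2 c a" "nbr_count b k d 2 0 a c = nbr_count b k d 0 2 c a"
    using nbr_count_shift[OF d, of 0 0] nbr_count_shift[OF d, of 1 1] nbr_count_shift[OF d, of 0 1]
      nbr_count_shift[OF d, of 1 0] nbr_count_swap[of b k d]
    by (simp_all add: numeral_2_eq_2)
  thus ?thesis by (simp add: eval_nat_numeral)
qed

lemma sum_X1_mat_products:
  assumes d: "circular b k d" and a: "a < t" and c: "c < t"
  shows "(\<Sum>r<b * k. X1_mat t b k d $$ (r, a) * X1_mat t b k d $$ (r, c)) = (3 * nbr_count b k d 1 1 a c
    + 2 * nbr_count b k d 1 2 a c + 2 * nbr_count b k d 1 2 c a + nbr_count b k d 0 2 a c + nbr_count b k d 0 2 c a) / 9"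
proof -
  have "(\<Sum>r<b * k. X1_mat t b k d $$ (r, a) * X1_mat t b k d $$ (r, c))
      = (\<Sum>r<b * k. \<Sum>\<sigma><3. \<Sum>\<sigma>'<3. incid (plot_trt k d \<sigma> r) a * incid (plot_trt k d \<sigma>' r) c) / 9"
    using a c by (simp add: X1_mat_entry sum_product sum_divide_distrib)
  also have "\<dots> = (\<Sum>\<sigma><3. \<Sum>\<sigma>'<3. nbr_count b k d \<sigma> \<sigma>' a c) / 9"
    unfolding nbr_count_def by (simp only: sum.swap[of _ "{..<b * k}"])
  finally show ?thesis unfolding sum_nbr_count[OF d] .
qed

definition block_count :: "nat \<Rightarrow> (nat \<Rightarrow> nat \<Rightarrow> nat) \<Rightarrow> nat \<Rightarrow> nat \<Rightarrow> real" where
  "block_count k d i a = (\<Sum>j<k. incid (d (i + 1) (j + 1)) a)"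

lemma block_count_card: "block_count k d i a = card {j. j < k \<and> d (i + 1) (j + 1) = Suc a}"
  unfolding block_count_def incid_def by (rule sum_indicator_card)

lemma block_sum_incid_plot_trt:
  assumes d: "circular b k d" and i: "i < b" and \<sigma>: "\<sigma> < 3"
  shows "block_sum k (\<lambda>r. incid (plot_trt k d \<sigma> r) a) i = block_count k d i a"
proof -
  have shift: "block_sum k (\<lambda>r. incid (plot_trt k d \<sigma> r) a) i
      = block_sum k (\<lambda>r. incid (plot_trt k d (\<sigma> + 1) r) a) i" if "\<sigma> \<le> 1" for \<sigma>
    using block_sum_plot_trt_shift[OF d i that that, of "\<lambda>x _. incid x a"] unfolding block_sum_def by simp
  have "\<sigma> = 0 \<or> \<sigma> = 1 \<or> \<sigma> = 2" using \<sigma> by auto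
  hence "block_sum k (\<lambda>r. incid (plot_trt k d \<sigma> r) a) i = block_sum k (\<lambda>r. incid (plot_trt k d 1 r) a) i"
    using shift[of 0] shift[of 1] by (auto simp: numeral_2_eq_2)
  thus ?thesis unfolding block_sum_def block_count_def by (simp add: plot_trt_block)
qed

lemma block_sum_X1_mat:
  assumes d: "circular b k d" and i: "i < b" and a: "a < t"
  shows "block_sum k (\<lambda>r. X1_mat t b k d $$ (r, a)) i = block_count k d i a"
proof -
  have "block_sum k (\<lambda>r. X1_mat t b k d $$ (r, a)) i = (\<Sum>\<sigma><3. block_sum k (\<lambda>r. incid (plot_trt k d \<sigma> r) a) i) / 3"
    using i a unfolding block_sum_def
    by (simp add: X1_mat_entry block_index_less sum_divide_distrib sum.swap[of _ "{..<k}"])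
  thus ?thesis by (simp add: block_sum_incid_plot_trt[OF d i])
qed

lemma sum_block_count_eq_block_size:
  assumes d: "d \<in> Omega t b k" and i: "i < b"
  shows "(\<Sum>a<t. block_count k d i a) = k"
proof -
  have "plot_trt k d 1 (i * k + j) \<in> {1..t}" if "j < k" for j
    using Omega_plot_trt[OF d block_index_less[OF i that]] by simp
  hence "(\<Sum>j<k. \<Sum>a<t. incid (d (i + 1) (j + 1)) a) = (\<Sum>j<k. 1)"
    by (intro sum.cong refl) (simp add: sum_incid plot_trt_block)
  thus ?thesis unfolding block_count_def by (simp add: sum.swap[of _ "{..<t}"])
qed

lemma sum_block_count_eq_replication:
  "(\<Sum>i<b. block_count k d i a) = nbr_count b k d 1 1 a a"
  unfolding nbr_count_def incid_square block_count_def sum_blocks by (simp add: plot_trt_block)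

lemma block_count_binary:
  assumes bin: "binary_design b k d" and i: "i < b"
  shows "block_count k d i a = (if Suc a \<in> d (i + 1) ` {1..k} then 1 else 0)"
proof -
  define S where "S = {j. j < k \<and> d (i + 1) (j + 1) = Suc a}"
  have inj: "inj_on (d (i + 1)) {1..k}" using bin i unfolding binary_design_def by simp
  have "\<forall>j1\<in>S. \<forall>j2\<in>S. j1 = j2"
    using inj_onD[OF inj] unfolding S_def by (metis (mono_tags, lifting) Suc_eq_plus1 Suc_leI atLeastAtMost_iff
      le_add2 mem_Collect_eq nat.inject)
  moreover have fin: "finite S" unfolding S_def by simp
  ultimately have "card S \<le> 1" using card_le_Suc0_iff_eq by (metis One_nat_def)
  moreover have "S \<noteq> {} \<longleftrightarrow> Suc a \<in> d (i + 1) ` {1..k}"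
  proof
    assume "S \<noteq> {}"
    then obtain j where "j < k" "d (i + 1) (j + 1) = Suc a" unfolding S_def by auto
    thus "Suc a \<in> d (i + 1) ` {1..k}" by (intro image_eqI[of _ _ "j + 1"]) auto
  next
    assume "Suc a \<in> d (i + 1) ` {1..k}"
    then obtain j where "j \<in> {1..k}" "d (i + 1) j = Suc a" by auto
    hence "j - 1 \<in> S" unfolding S_def by auto
    thus "S \<noteq> {}" by auto
  qed
  ultimately show ?thesis unfolding block_count_card S_def[symmetric]
    using card_0_eq[OF fin] by (cases "Suc a \<in> d (i + 1) ` {1..k}") auto
qed

lemma sum_block_count_products_binary:
  assumes bin: "binary_design b k d"
  shows "(\<Sum>i<b. block_count k d i a * block_count k d i c)
    = card {i \<in> {1..b}. Suc a \<in> d i ` {1..k} \<and> Suc c \<in> d i ` {1..k}}"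
proof -
  let ?P = "\<lambda>i. Suc a \<in> d i ` {1..k} \<and> Suc c \<in> d i ` {1..k}"
  have "(\<Sum>i<b. block_count k d i a * block_count k d i c) = (\<Sum>i<b. if ?P (i + 1) then 1 else 0)"
    by (intro sum.cong refl) (simp add: block_count_binary[OF bin])
  also have "\<dots> = card {i. i < b \<and> ?P (i + 1)}" by (rule sum_indicator_card)
  also have "card {i. i < b \<and> ?P (i + 1)} = card {i \<in> {1..b}. ?P i}"
    by (rule bij_betw_same_card[of Suc], rule bij_betw_byWitness[where f' = "\<lambda>i. i - 1"]) auto
  finally show ?thesis .
qed

lemma card_inner_plots:
  assumes k: "0 < k"
  shows "card {(i, j) \<in> inner_plots b k. P i j} = card {r. r < b * k \<and> P (r div k + 1) (r mod k + 1)}"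
proof -
  have "bij_betw (\<lambda>r. (r div k + 1, r mod k + 1)) {r. r < b * k \<and> P (r div k + 1) (r mod k + 1)}
      {(i, j) \<in> inner_plots b k. P i j}"
  proof (rule bij_betw_byWitness[where f' = "\<lambda>(i, j). (i - 1) * k + (j - 1)"])
    show "\<forall>r\<in>{r. r < b * k \<and> P (r div k + 1) (r mod k + 1)}.
        (case (r div k + 1, r mod k + 1) of (i, j) \<Rightarrow> (i - 1) * k + (j - 1)) = r"
      by simp
    have "(i - 1) * k + (j - 1) < b * k" "((i - 1) * k + (j - 1)) div k + 1 = i"
      "((i - 1) * k + (j - 1)) mod k + 1 = j" if "i \<in> {1..b}" "j \<in> {1..k}" for i j
    proof -
      have ij: "i - 1 < b" "j - 1 < k" using that by auto
      thus "(i - 1) * k + (j - 1) < b * k" by (rule block_index_less)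
      show "((i - 1) * k + (j - 1)) div k + 1 = i" "((i - 1) * k + (j - 1)) mod k + 1 = j"
        unfolding block_index_div_mod[OF ij(2)] using that by auto
    qed
    thus "\<forall>p\<in>{(i, j) \<in> inner_plots b k. P i j}.
        (\<lambda>r. (r div k + 1, r mod k + 1)) (case p of (i, j) \<Rightarrow> (i - 1) * k + (j - 1)) = p"
      "(\<lambda>(i, j). (i - 1) * k + (j - 1)) ` {(i, j) \<in> inner_plots b k. P i j}
        \<subseteq> {r. r < b * k \<and> P (r div k + 1) (r mod k + 1)}"
      unfolding inner_plots_def by auto
    show "(\<lambda>r. (r div k + 1, r mod k + 1)) ` {r. r < b * k \<and> P (r div k + 1) (r mod k + 1)}
        \<subseteq> {(i, j) \<in> inner_plots b k. P i j}"
      unfolding inner_plots_def using k by (auto simp: less_mult_imp_div_less Suc_leI)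
  qed
  thus ?thesis by (rule bij_betw_same_card[symmetric])
qed

lemma nbr_count_inner_plots:
  assumes k: "0 < k"
  shows "nbr_count b k d \<sigma> \<sigma>' a c
    = card {(i, j) \<in> inner_plots b k. d i (j + \<sigma> - 1) = Suc a \<and> d i (j + \<sigma>' - 1) = Suc c}"
proof -
  have "nbr_count b k d \<sigma> \<sigma>' a c
      = (\<Sum>r\<in>{r. r < b * k \<and> plot_trt k d \<sigma> r = Suc a \<and> plot_trt k d \<sigma>' r = Suc c}. 1)"
    unfolding nbr_count_def incid_def by (rule sum.mono_neutral_cong_right) auto
  thus ?thesis unfolding card_inner_plots[OF k] plot_trt_def by simp
qed

definition distinct_nbrs :: "nat \<Rightarrow> nat \<Rightarrow> (nat \<Rightarrow> nat \<Rightarrow> nat) \<Rightarrow> bool" where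
  "distinct_nbrs b k d \<longleftrightarrow>
     (\<forall>r<b * k. \<forall>\<sigma><3. \<forall>\<sigma>'<3. \<sigma> \<noteq> \<sigma>' \<longrightarrow> plot_trt k d \<sigma> r \<noteq> plot_trt k d \<sigma>' r)"

lemma nbr_count_diag_eq_0:
  assumes "distinct_nbrs b k d" "\<sigma> < 3" "\<sigma>' < 3" "\<sigma> \<noteq> \<sigma>'"
  shows "nbr_count b k d \<sigma> \<sigma>' a a = 0"
proof -
  have "incid (plot_trt k d \<sigma> r) a * incid (plot_trt k d \<sigma>' r) a = 0" if "r < b * k" for r
  proof -
    have "plot_trt k d \<sigma> r \<noteq> plot_trt k d \<sigma>' r" using assms that unfolding distinct_nbrs_def by blast
    thus ?thesis unfolding incid_def by simp
  qed
  thus ?thesis unfolding nbr_count_def by (intro sum.neutral) simp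
qed

lemma distinct_nbrsI:
  assumes "\<And>i j. i \<in> {1..b} \<Longrightarrow> j \<in> {1..k} \<Longrightarrow>
    d i (j - 1) \<noteq> d i j \<and> d i j \<noteq> d i (j + 1) \<and> d i (j - 1) \<noteq> d i (j + 1)"
  shows "distinct_nbrs b k d"
  unfolding distinct_nbrs_def
proof (intro allI impI)
  fix r \<sigma> \<sigma>' :: nat assume r: "r < b * k" and \<sigma>: "\<sigma> < 3" "\<sigma>' < 3" "\<sigma> \<noteq> \<sigma>'"
  have "r div k + 1 \<in> {1..b}" "r mod k + 1 \<in> {1..k}" using block_index_bounds[OF r] by auto
  note D = assms[OF this]
  have "plot_trt k d 0 r = d (r div k + 1) (r mod k + 1 - 1)" "plot_trt k d 1 r = d (r div k + 1) (r mod k + 1)"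
    "plot_trt k d 2 r = d (r div k + 1) (r mod k + 1 + 1)"
    unfolding plot_trt_def by simp_all
  moreover have "\<sigma> \<in> {0, 1, 2}" "\<sigma>' \<in> {0, 1, 2}" using \<sigma> by auto
  ultimately show "plot_trt k d \<sigma> r \<noteq> plot_trt k d \<sigma>' r" using D \<sigma>(3) by fastforce
qed

lemma distinct_nbrs_no_self_neighbors:
  assumes c: "circular b k d" and n: "no_self_neighbors b k d"
  shows "distinct_nbrs b k d"
proof (rule distinct_nbrsI)
  fix i j assume i: "i \<in> {1..b}" and j: "j \<in> {1..k}"
  have N: "d i j' \<noteq> d i (j' - 1) \<and> d i (j' - 1) \<noteq> d i (j' + 1)" if "j' \<in> {1..k}" for j'
    using n i that unfolding no_self_neighbors_def by blast
  have "d i j \<noteq> d i (j + 1)"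
  proof (cases "j < k")
    case True thus ?thesis using N[of "j + 1"] by auto
  next
    case False
    hence "j = k" using j by simp
    thus ?thesis using N[of 1] j c i unfolding circular_def by auto
  qed
  thus "d i (j - 1) \<noteq> d i j \<and> d i j \<noteq> d i (j + 1) \<and> d i (j - 1) \<noteq> d i (j + 1)"
    using N[OF j] by auto
qed

lemma distinct_nbrs_binary:
  assumes c: "circular b k d" and bin: "binary_design b k d" and k: "3 \<le> k"
  shows "distinct_nbrs b k d"
proof (rule distinct_nbrsI)
  fix i j assume i: "i \<in> {1..b}" and j: "j \<in> {1..k}"
  have inj: "inj_on (d i) {1..k}" using bin i unfolding binary_design_def by blast
  define jl where "jl = (if j = 1 then k else j - 1)"
  define jr where "jr = (if j = k then 1 else j + 1)"
  have "d i (j - 1) = d i jl" "d i (j + 1) = d i jr"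
    using c i j unfolding jl_def jr_def circular_def by auto
  moreover have "jl \<in> {1..k}" "jr \<in> {1..k}" "jl \<noteq> j" "j \<noteq> jr" "jl \<noteq> jr"
    using j k unfolding jl_def jr_def by auto
  ultimately show "d i (j - 1) \<noteq> d i j \<and> d i j \<noteq> d i (j + 1) \<and> d i (j - 1) \<noteq> d i (j + 1)"
    using inj_onD[OF inj] j by metis
qed

lemma sum_nbr_count_diag:
  assumes d: "d \<in> Omega t b k"
  shows "(\<Sum>a<t. nbr_count b k d 1 1 a a) = b * k"
proof -
  have "(\<Sum>r<b * k. \<Sum>a<t. incid (plot_trt k d 1 r) a) = (\<Sum>r<b * k. 1)"
    using Omega_plot_trt[OF d] by (intro sum.cong refl) (simp add: sum_incid)
  thus ?thesis unfolding nbr_count_def incid_square by (simp add: sum.swap[of _ "{..<t}"])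
qed

section \<open>The information matrices of the competing designs\<close>

lemma block_info_mat_entry:
  assumes d: "circular b k d" and a: "a < t" and c: "c < t"
  shows "block_info_mat t b k d $$ (a, c) = (3 * nbr_count b k d 1 1 a c
    + 2 * nbr_count b k d 1 2 a c + 2 * nbr_count b k d 1 2 c a + nbr_count b k d 0 2 a c + nbr_count b k d 0 2 c a) / 9
    - (\<Sum>i<b. block_count k d i a * block_count k d i c) / k"
  unfolding block_info_mat_def block_avg_complement_quadratic_entry[OF X1_mat_carrier a c]
    sum_X1_mat_products[OF d a c]
  using a c by (simp add: block_sum_X1_mat[OF d])

lemma mat_trace_block_info_mat:
  assumes d: "d \<in> Omega t b k" and nb: "distinct_nbrs b k d"
  shows "mat_trace (block_info_mat t b k d) = real b * real k / 3 - (\<Sum>i<b. \<Sum>a<t. (block_count k d i a)\<^sup>2) / k"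
proof -
  have c: "circular b k d" using d unfolding Omega_def by simp
  have "mat_trace (block_info_mat t b k d)
      = (\<Sum>a<t. nbr_count b k d 1 1 a a / 3 - (\<Sum>i<b. (block_count k d i a)\<^sup>2) / k)"
    unfolding mat_trace_def using block_info_mat_carrier[of t b k d]
    by (intro sum.cong) (simp_all add: block_info_mat_entry[OF c] nbr_count_diag_eq_0[OF nb] power2_eq_square)
  also have "\<dots> = real b * real k / 3 - (\<Sum>i<b. \<Sum>a<t. (block_count k d i a)\<^sup>2) / k"
    using sum_nbr_count_diag[OF d]
    by (simp add: sum_subtractf sum_divide_distrib[symmetric] sum.swap[of _ "{..<t}"])
  finally show ?thesis by simp
qed

lemma mat_trace_block_info_mat_le:
  assumes d: "d \<in> Omega t b k" and nb: "distinct_nbrs b k d" and k: "0 < k"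
  shows "mat_trace (block_info_mat t b k d) \<le> real b * (real k - 3) / 3"
proof -
  have "block_count k d i a \<le> (block_count k d i a)\<^sup>2" for i a
    unfolding block_count_card power2_eq_square of_nat_mult[symmetric] of_nat_le_iff by (rule le_square)
  hence "(\<Sum>i<b. \<Sum>a<t. block_count k d i a) \<le> (\<Sum>i<b. \<Sum>a<t. (block_count k d i a)\<^sup>2)"
    by (intro sum_mono)
  hence "b \<le> (\<Sum>i<b. \<Sum>a<t. (block_count k d i a)\<^sup>2) / k"
    using k by (simp add: sum_block_count_eq_block_size[OF d] le_divide_eq)
  thus ?thesis unfolding mat_trace_block_info_mat[OF d nb] using k by (simp add: field_simps)
qed

lemma mat_trace_block_info_mat_binary:
  assumes d: "d \<in> Omega t b k" and bin: "binary_design b k d" and k: "3 \<le> k"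
  shows "mat_trace (block_info_mat t b k d) = real b * (real k - 3) / 3"
proof -
  have c: "circular b k d" using d unfolding Omega_def by simp
  have "(\<Sum>i<b. \<Sum>a<t. (block_count k d i a)\<^sup>2) = (\<Sum>i<b. \<Sum>a<t. block_count k d i a)"
    by (intro sum.cong refl) (simp add: block_count_binary[OF bin])
  thus ?thesis using k
    unfolding mat_trace_block_info_mat[OF d distinct_nbrs_binary[OF c bin k]]
    by (simp add: sum_block_count_eq_block_size[OF d] field_simps)
qed

text \<open>If distance-2 counts equal reversed distance-1 counts, then T, L and R have the same inner
  products with every column of (I - Q) X1.\<close>

lemma sum_incid_mult_block_avg_complement:
  assumes d: "circular b k d" and \<sigma>: "\<sigma> < 3" and a: "a < t" and c: "c < t"
    and N: "\<forall>a<t. \<forall>c<t. nbr_count b k d 0 2 a c = nbr_count b k d 1 2 c a"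
  shows "(\<Sum>r<b * k. incid (plot_trt k d \<sigma> r) a * ((1\<^sub>m (b * k) - block_avg_mat b k) * X1_mat t b k d) $$ (r, c))
    = (nbr_count b k d 1 1 a c + nbr_count b k d 1 2 a c + nbr_count b k d 1 2 c a) / 3
      - (\<Sum>i<b. block_count k d i a * block_count k d i c) / k"
proof -
  have "(\<Sum>r<b * k. incid (plot_trt k d \<sigma> r) a * X1_mat t b k d $$ (r, c))
      = (\<Sum>\<sigma>'<3. nbr_count b k d \<sigma> \<sigma>' a c) / 3"
    using c unfolding nbr_count_def
    by (simp add: X1_mat_entry sum_distrib_left sum_divide_distrib sum.swap[of _ "{..<b * k}"])
  also have "\<dots> = (nbr_count b k d 1 1 a c + nbr_count b k d 1 2 a c + nbr_count b k d 1 2 c a) / 3"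
  proof -
    have "\<sigma> = 0 \<or> \<sigma> = 1 \<or> \<sigma> = 2" using \<sigma> by auto
    thus ?thesis
      using nbr_count_shift[OF d, of 0 0] nbr_count_shift[OF d, of 1 1] nbr_count_shift[OF d, of 0 1]
        nbr_count_shift[OF d, of 1 0] nbr_count_swap[of b k d] N a c
      by (auto simp: eval_nat_numeral)
  qed
  finally show ?thesis
    using a c by (simp add: sum_mult_block_avg_complement[OF X1_mat_carrier c] block_sum_incid_plot_trt[OF d _ \<sigma>]
        block_sum_X1_mat[OF d])
qed

lemma C_total_eq_block_info_mat:
  assumes d: "d \<in> Omega t b k" and k: "0 < k"
    and N: "\<forall>a<t. \<forall>c<t. nbr_count b k d 0 2 a c = nbr_count b k d 1 2 c a"
  shows "C_total t b k d = block_info_mat t b k d"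
proof -
  have c: "circular b k d" using d unfolding Omega_def by simp
  define W where "W = (1\<^sub>m (b * k) - block_avg_mat b k) * X1_mat t b k d"
  have W: "W \<in> carrier_mat (b * k) t"
    unfolding W_def using block_avg_mat_carrier X1_mat_carrier by (rule mult_carrier_mat[OF minus_carrier_mat])
  have "transpose_mat (design_mat t b k d * M_mat t) * W = 0\<^sub>m (3 * t) t"
    unfolding W_def using sum_incid_mult_block_avg_complement[OF c _ _ _ N]
    by (intro transpose_design_mat_M_mult_eq_0[OF W[unfolded W_def]])
  moreover have "transpose_mat (block_matrix b k) * W = 0\<^sub>m b t"
    unfolding W_def by (rule transpose_block_matrix_mult_complement[OF k X1_mat_carrier])
  ultimately have "transpose_mat (hconcat (design_mat t b k d * M_mat t) (block_matrix b k)) * W = 0\<^sub>m (3 * t + b) t"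
    by (intro transpose_hconcat_mult_eq_0[OF design_mat_M_carrier block_matrix_carrier W])
  thus ?thesis unfolding C_total_eq block_info_mat_def W_def
    by (intro info_matrix_eq[OF X1_mat_carrier hconcat_carrier[OF design_mat_M_carrier block_matrix_carrier]
          orth_projector_block_avg_mat[OF k] proj_hconcat_mult_block_avg_mat[OF design_mat_M_carrier]])
qed

lemma mat_trace_C_total_le_no_self_neighbors:
  assumes d: "d \<in> Omega t b k" and n: "no_self_neighbors b k d" and k: "0 < k"
  shows "mat_trace (C_total t b k d) \<le> real b * (real k - 3) / 3"
proof -
  have "circular b k d" using d unfolding Omega_def by simp
  hence nb: "distinct_nbrs b k d" using n by (rule distinct_nbrs_no_self_neighbors)
  have "mat_trace (C_total t b k d) \<le> mat_trace (block_info_mat t b k d)" by (rule mat_trace_C_total_le[OF k])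
  also have "\<dots> \<le> real b * (real k - 3) / 3" by (rule mat_trace_block_info_mat_le[OF d nb k])
  finally show ?thesis .
qed

lemma CNBD2_nbr_count:
  assumes d: "CNBD2 t b k l d" and k: "0 < k" and ac: "a < t" "c < t" "a \<noteq> c"
  shows "nbr_count b k d 1 2 a c = l" and "nbr_count b k d 0 2 a c = l"
  using d ac unfolding CNBD2_def CNBD_def nbr_count_inner_plots[OF k] by auto

lemma CNBD2_dist2_eq_dist1:
  assumes d: "CNBD2 t b k l d" and k: "3 \<le> k"
  shows "\<forall>a<t. \<forall>c<t. nbr_count b k d 0 2 a c = nbr_count b k d 1 2 c a"
proof (intro allI impI)
  fix a c assume ac: "a < t" "c < t"
  have "circular b k d" "binary_design b k d"
    using d unfolding CNBD2_def CNBD_def Omega_def by auto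
  hence "distinct_nbrs b k d" using k by (rule distinct_nbrs_binary)
  thus "nbr_count b k d 0 2 a c = nbr_count b k d 1 2 c a"
    using CNBD2_nbr_count[OF d _ ac] CNBD2_nbr_count[OF d _ ac(2,1)] k
    by (cases "a = c") (auto simp: nbr_count_diag_eq_0)
qed

lemma completely_symmetric_block_info_mat:
  assumes d: "CNBD2 t b k l d" and k: "3 \<le> k"
  shows "completely_symmetric t (block_info_mat t b k d)"
proof -
  have c: "circular b k d" and bin: "binary_design b k d" and bal: "balanced_block_design t b k d"
    using d unfolding CNBD2_def CNBD_def Omega_def by auto
  have nb: "distinct_nbrs b k d" by (rule distinct_nbrs_binary[OF c bin k])
  obtain rep where rep: "\<forall>a\<in>{1..t}. card {(i, j) \<in> inner_plots b k. d i j = a} = rep"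
    using bal unfolding balanced_block_design_def by blast
  obtain lam where lam: "\<forall>a\<in>{1..t}. \<forall>c\<in>{1..t}. a \<noteq> c \<longrightarrow>
      card {i \<in> {1..b}. a \<in> d i ` {1..k} \<and> c \<in> d i ` {1..k}} = lam"
    using bal unfolding balanced_block_design_def by blast
  have D: "nbr_count b k d 1 1 a a = rep" if "a < t" for a
    using rep that k by (simp add: nbr_count_inner_plots)
  have diag: "block_info_mat t b k d $$ (a, a) = rep / 3 - rep / k" if "a < t" for a
  proof -
    have "(\<Sum>i<b. block_count k d i a * block_count k d i a) = (\<Sum>i<b. block_count k d i a)"
      by (intro sum.cong refl) (simp add: block_count_binary[OF bin])
    hence "(\<Sum>i<b. block_count k d i a * block_count k d i a) = rep"
      using D[OF that] by (simp add: sum_block_count_eq_replication)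
    thus ?thesis using that D
      by (simp add: block_info_mat_entry[OF c] nbr_count_diag_eq_0[OF nb])
  qed
  have off: "block_info_mat t b k d $$ (a, c) = 2 * l / 3 - lam / k" if "a < t" "c < t" "a \<noteq> c" for a c
  proof -
    have "nbr_count b k d 1 1 a c = 0"
      unfolding nbr_count_def incid_def using that by (intro sum.neutral) auto
    moreover have "(\<Sum>i<b. block_count k d i a * block_count k d i c) = lam"
      using lam that by (simp add: sum_block_count_products_binary[OF bin])
    ultimately show ?thesis
      using that k CNBD2_nbr_count[OF d] by (simp add: block_info_mat_entry[OF c])
  qed
  show ?thesis unfolding completely_symmetric_def using block_info_mat_carrier diag off by simp
qed

lemma CNBD2_C_total:
  assumes d: "CNBD2 t b k l d" and k: "3 \<le> k"
  shows "completely_symmetric t (C_total t b k d)"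
    and "mat_trace (C_total t b k d) = real b * (real k - 3) / 3"
proof -
  have dO: "d \<in> Omega t b k" and bin: "binary_design b k d" using d unfolding CNBD2_def CNBD_def by auto
  have C: "C_total t b k d = block_info_mat t b k d"
    using k by (intro C_total_eq_block_info_mat[OF dO _ CNBD2_dist2_eq_dist1[OF d k]]) simp
  show "completely_symmetric t (C_total t b k d)"
    unfolding C by (rule completely_symmetric_block_info_mat[OF d k])
  show "mat_trace (C_total t b k d) = real b * (real k - 3) / 3"
    unfolding C by (rule mat_trace_block_info_mat_binary[OF dO bin k])
qed

text \<open>The divisibility hypothesis only makes l an integer; the argument works for any l.\<close>

theorem theorem7:
  fixes t b k :: nat and dstar :: "nat \<Rightarrow> nat \<Rightarrow> nat"
  assumes "0 < b" and "4 \<le> k" and "k \<le> t"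
    and "t * (t - 1) dvd b * k"
    and "dstar \<in> Omega t b k"
    and "CNBD2 t b k (b * k div (t * (t - 1))) dstar"
  shows "universally_optimal t (C_total t b k) dstar
           {d \<in> Omega t b k. no_self_neighbors b k d}"
  unfolding universally_optimal_def
proof (intro allI impI ballI)
  fix \<Phi> d assume \<Phi>: "kiefer_criterion t \<Phi>" and "d \<in> {d \<in> Omega t b k. no_self_neighbors b k d}"
  hence d: "d \<in> Omega t b k" "no_self_neighbors b k d" by auto
  have t: "2 \<le> t" and k: "0 < k" "3 \<le> k" using assms(2,3) by auto
  note Cs = CNBD2_C_total[OF assms(6) k(2)]
  have "0 < real b * (real k - 3)" using assms(1,2) by (intro mult_pos_pos) auto
  hence "0 < mat_trace (C_total t b k dstar)" unfolding Cs(2) by simp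
  moreover have "mat_trace (C_total t b k d) \<le> mat_trace (C_total t b k dstar)"
    unfolding Cs(2) by (rule mat_trace_C_total_le_no_self_neighbors[OF d k(1)])
  ultimately show "\<Phi> (C_total t b k dstar) \<le> \<Phi> (C_total t b k d)"
    by (intro kiefer_universal_optimality[OF t \<Phi> Cs(1) zero_row_sums_C_total[OF assms(5)] nnd_sym_C_total _
          nnd_sym_C_total zero_row_sums_C_total[OF d(1)]])
qed

end
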